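(* Let $X$ be an FK-space containing $\phi$. The following are equivalent: (i) $X$ has $F\sigma_p^q[K]$; (ii) $X\subseteq(D_p^qS)^{dd}$; (iii) $X\subseteq(D_p^qW)^{dd}$; (iv) $X\subseteq(D_p^qF)^{dd}$; (v) $X^d=(D_p^qS)^d$; (vi) $X^d=(D_p^qF)^d$. Here the subspaces are computed in $X$.
   Context: An FK-space is a vector subspace of the space $w$ of all complex sequences with a complete metrizable locally convex topology in which coordinate functionals are continuous; $X'$ is its continuous dual. $\delta^j$ has $1$ in position $j$, $0$ elsewhere; $\phi=\operatorname{span}\{\delta^j\}$. $p(n)<q(n)$ are nonnegative integer sequences with $q(n)\to\infty$. For $x\in w$, $x^{(k)}=\sum_{j=1}^kx_j\delta^j$ and $T_n(x)=\frac{1}{q(n)-p(n)}\sum_{k=p(n)+1}^{q(n)}x^{(k)}$. $D_p^qS=\{x\in X: T_n(x)\to x\text{ in }X\}$; $D_p^qW=\{x\in X: f(T_n(x))\to f(x)\ \forall f\in X'\}$; $D_p^qF^+=\{x\in w:\lim_n f(T_n(x))\text{ exists }\forall f\in X'\}$, where $f(T_n(x))=\frac{1}{q(n)-p(n)}\sum_{k=p(n)+1}^{q(n)}\sum_{j=1}^kx_jf(\delta^j)$; $D_p^qF=D_p^qF^+\cap X$. $X$ has $F\sigma_p^q[K]$ if $X\subseteq D_p^qF^+$. $\sigma_p^q[s]=\{x:\lim_n\frac{1}{q(n)-p(n)}\sum_{k=p(n)+1}^{q(n)}\sum_{j=1}^kx_j\text{ exists}\}$; for $E\subseteq w$, $E^d=\{x\in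 w:(x_ny_n)_n\in\sigma_p^q[s]\ \forall y\in E\}$, $E^{dd}=(E^d)^d$. *)

theory Defs
  imports "HOL-Analysis.Analysis"
begin

type_synonym cseq = "nat \<Rightarrow> complex"

text \<open>Sequences are indexed from 0 (coordinate j of the paper is index j-1 here).\<close>

definition phi :: "cseq set" where
  "phi = {x. finite {j. x j \<noteq> 0}}"

definition unit_seq :: "nat \<Rightarrow> cseq" where
  "unit_seq j = (\<lambda>i. if i = j then 1 else 0)"

text \<open>Locally convex metrizable topology on X given by a countable family of seminorms P k.\<close>
definition seminorm_on :: "cseq set \<Rightarrow> (cseq \<Rightarrow> real) \<Rightarrow> bool" where
  "seminorm_on X s \<longleftrightarrow>
     (\<forall>x\<in>X. 0 \<le> s x) \<and>
     (\<forall>x\<in>X. \<forall>c. s (\<lambda>j. c * x j) = norm c * s x) \<and>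
     (\<forall>x\<in>X. \<forall>y\<in>X. s (\<lambda>j. x j + y j) \<le> s x + s y)"

definition subspace_w :: "cseq set \<Rightarrow> bool" where
  "subspace_w X \<longleftrightarrow> (\<lambda>j. 0) \<in> X \<and>
     (\<forall>x\<in>X. \<forall>y\<in>X. (\<lambda>j. x j + y j) \<in> X) \<and>
     (\<forall>x\<in>X. \<forall>c. (\<lambda>j. c * x j) \<in> X)"

definition FK_space :: "cseq set \<Rightarrow> (nat \<Rightarrow> cseq \<Rightarrow> real) \<Rightarrow> bool" where
  "FK_space X P \<longleftrightarrow>
     subspace_w X \<and>
     (\<forall>k. seminorm_on X (P k)) \<and>
     (\<forall>j. \<exists>N C. \<forall>x\<in>X. norm (x j) \<le> C * (\<Sum>k\<le>N. P k x)) \<and>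
     (\<forall>s. (\<forall>n. s n \<in> X) \<and>
          (\<forall>k. \<forall>e>0. \<exists>M. \<forall>m\<ge>M. \<forall>n\<ge>M. P k (\<lambda>j. s m j - s n j) < e)
        \<longrightarrow> (\<exists>x\<in>X. \<forall>k. (\<lambda>n. P k (\<lambda>j. s n j - x j)) \<longlonglongrightarrow> 0))"

definition cdual :: "cseq set \<Rightarrow> (nat \<Rightarrow> cseq \<Rightarrow> real) \<Rightarrow> (cseq \<Rightarrow> complex) set" where
  "cdual X P = {f.
     (\<forall>x\<in>X. \<forall>y\<in>X. f (\<lambda>j. x j + y j) = f x + f y) \<and>
     (\<forall>x\<in>X. \<forall>c. f (\<lambda>j. c * x j) = c * f x) \<and>
     (\<exists>N C. \<forall>x\<in>X. norm (f x) \<le> C * (\<Sum>k\<le>N. P k x))}"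

definition sect :: "cseq \<Rightarrow> nat \<Rightarrow> cseq" where
  "sect x k = (\<lambda>j. if j < k then x j else 0)"

definition Tn :: "(nat \<Rightarrow> nat) \<Rightarrow> (nat \<Rightarrow> nat) \<Rightarrow> nat \<Rightarrow> cseq \<Rightarrow> cseq" where
  "Tn p q n x = (\<lambda>j. (1 / of_nat (q n - p n)) * (\<Sum>k\<in>{p n<..q n}. sect x k j))"

definition DS :: "cseq set \<Rightarrow> (nat \<Rightarrow> cseq \<Rightarrow> real) \<Rightarrow> (nat \<Rightarrow> nat) \<Rightarrow> (nat \<Rightarrow> nat) \<Rightarrow> cseq set" where
  "DS X P p q = {x\<in>X. \<forall>k. (\<lambda>n. P k (\<lambda>j. Tn p q n x j - x j)) \<longlonglongrightarrow> 0}"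

definition DW :: "cseq set \<Rightarrow> (nat \<Rightarrow> cseq \<Rightarrow> real) \<Rightarrow> (nat \<Rightarrow> nat) \<Rightarrow> (nat \<Rightarrow> nat) \<Rightarrow> cseq set" where
  "DW X P p q = {x\<in>X. \<forall>f\<in>cdual X P. (\<lambda>n. f (Tn p q n x)) \<longlonglongrightarrow> f x}"

definition DFplus :: "cseq set \<Rightarrow> (nat \<Rightarrow> cseq \<Rightarrow> real) \<Rightarrow> (nat \<Rightarrow> nat) \<Rightarrow> (nat \<Rightarrow> nat) \<Rightarrow> cseq set" where
  "DFplus X P p q = {x. \<forall>f\<in>cdual X P. convergent (\<lambda>n.
      (1 / of_nat (q n - p n)) * (\<Sum>k\<in>{p n<..q n}. \<Sum>j<k. x j * f (unit_seq j)))}"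

definition DF :: "cseq set \<Rightarrow> (nat \<Rightarrow> cseq \<Rightarrow> real) \<Rightarrow> (nat \<Rightarrow> nat) \<Rightarrow> (nat \<Rightarrow> nat) \<Rightarrow> cseq set" where
  "DF X P p q = DFplus X P p q \<inter> X"

definition has_Fsigma :: "cseq set \<Rightarrow> (nat \<Rightarrow> cseq \<Rightarrow> real) \<Rightarrow> (nat \<Rightarrow> nat) \<Rightarrow> (nat \<Rightarrow> nat) \<Rightarrow> bool" where
  "has_Fsigma X P p q \<longleftrightarrow> X \<subseteq> DFplus X P p q"

definition sigma_s :: "(nat \<Rightarrow> nat) \<Rightarrow> (nat \<Rightarrow> nat) \<Rightarrow> cseq set" where
  "sigma_s p q = {x. convergent (\<lambda>n.
      (1 / of_nat (q n - p n)) * (\<Sum>k\<in>{p n<..q n}. \<Sum>j<k. x j))}"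

definition ddual :: "(nat \<Rightarrow> nat) \<Rightarrow> (nat \<Rightarrow> nat) \<Rightarrow> cseq set \<Rightarrow> cseq set" where
  "ddual p q E = {x. \<forall>y\<in>E. (\<lambda>n. x n * y n) \<in> sigma_s p q}"

end

theory Submission
  imports Defs
begin

lemma convergent_norm_bounded: "convergent (a :: nat \<Rightarrow> complex) \<Longrightarrow> \<exists>B. \<forall>n. norm (a n) \<le> B"
  by (drule convergent_imp_Bseq) (auto simp: Bseq_def)

definition section_weight :: "(nat \<Rightarrow> nat) \<Rightarrow> (nat \<Rightarrow> nat) \<Rightarrow> nat \<Rightarrow> nat \<Rightarrow> complex" where
  "section_weight p q n j = of_nat (card {k\<in>{p n<..q n}. j < k}) / of_nat (q n - p n)"

definition section_mean :: "(nat \<Rightarrow> nat) \<Rightarrow> (nat \<Rightarrow> nat) \<Rightarrow> nat \<Rightarrow> cseq \<Rightarrow> complex" where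
  "section_mean p q n a = (1 / of_nat (q n - p n)) * (\<Sum>k\<in>{p n<..q n}. \<Sum>j<k. a j)"

lemma sigma_s_iff: "a \<in> sigma_s p q \<longleftrightarrow> convergent (\<lambda>n. section_mean p q n a)"
  unfolding sigma_s_def section_mean_def by simp

lemma Tn_eq_weighted: "Tn p q n x = (\<lambda>j. section_weight p q n j * x j)"
proof
  fix j
  have "(\<Sum>k\<in>{p n<..q n}. sect x k j) = (\<Sum>k\<in>{k\<in>{p n<..q n}. j < k}. x j)"
    unfolding sect_def by (rule sum.inter_filter[symmetric]) simp
  then show "Tn p q n x j = section_weight p q n j * x j"
    unfolding Tn_def section_weight_def by simp
qed

lemma section_weight_eq_0: "q n \<le> j \<Longrightarrow> section_weight p q n j = 0"
  unfolding section_weight_def by (subgoal_tac "{k\<in>{p n<..q n}. j < k} = {}") auto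

lemma section_mean_eq_weighted_sum:
  "section_mean p q n a = (\<Sum>j<q n. section_weight p q n j * a j)"
proof -
  have "(\<Sum>k\<in>{p n<..q n}. \<Sum>j<k. a j) = (\<Sum>k\<in>{p n<..q n}. \<Sum>j\<in>{j\<in>{..<q n}. j < k}. a j)"
    by (intro sum.cong) auto
  also have "\<dots> = (\<Sum>j<q n. \<Sum>k\<in>{k\<in>{p n<..q n}. j < k}. a j)"
    by (rule sum.swap_restrict) auto
  finally show ?thesis
    unfolding section_mean_def section_weight_def by (simp add: sum_distrib_left field_simps)
qed

lemma section_weight_eq_real:
  assumes "p n < q n" "j < q n"
  shows "section_weight p q n j =
    of_real ((real (q n) - real (max (p n) j)) / (real (q n) - real (p n)))"
proof -
  have "{k\<in>{p n<..q n}. j < k} = {max (p n) j<..q n}" by auto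
  then show ?thesis unfolding section_weight_def using assms by (simp add: of_nat_diff)
qed

lemma section_weight_deviation_real:
  fixes p q j :: nat
  assumes "p < q" "j < q"
  shows "\<bar>(real q - real (max p j)) / (real q - real p) - 1\<bar> \<le> real j / real q"
proof (cases "j \<le> p")
  case False
  have "(real q - real j) / (real q - real p) - 1 = - ((real j - real p) / (real q - real p))"
    using assms by (simp add: field_simps)
  moreover have "real j * real p \<le> real q * real p"
    using assms by (intro mult_right_mono) auto
  then have "(real j - real p) * real q \<le> real j * (real q - real p)"
    by (simp add: algebra_simps)
  then have "(real j - real p) / (real q - real p) \<le> real j / real q"
    using assms by (simp add: divide_simps)
  ultimately show ?thesis
    using False assms by (simp add: max_absorb2)
qed (use assms in \<open>simp add: max_absorb1\<close>)

lemma section_weight_deviation: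
  assumes "p n < q n" "j < q n"
  shows "norm (section_weight p q n j - 1) \<le> real j / real (q n)"
proof -
  let ?r = "(real (q n) - real (max (p n) j)) / (real (q n) - real (p n))"
  have "section_weight p q n j = of_real ?r"
    by (rule section_weight_eq_real[of p n q j, OF assms])
  then have "section_weight p q n j - 1 = of_real (?r - 1)"
    by (simp only: of_real_diff of_real_1)
  then have "norm (section_weight p q n j - 1) = \<bar>?r - 1\<bar>"
    by (simp only: norm_of_real)
  also have "\<dots> \<le> real j / real (q n)"
    using assms by (rule section_weight_deviation_real)
  finally show ?thesis .
qed

lemma section_weight_tendsto_1:
  assumes pq: "\<And>n. p n < q n" and q: "filterlim q at_top sequentially"
  shows "(\<lambda>n. section_weight p q n j) \<longlonglongrightarrow> 1"
proof -
  have "eventually (\<lambda>n. Suc j \<le> q n) sequentially"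
    using q unfolding filterlim_at_top by blast
  then have "eventually (\<lambda>n. norm (section_weight p q n j - 1) \<le> real j / real (q n)) sequentially"
  proof (rule eventually_mono)
    fix n
    assume "Suc j \<le> q n"
    then show "norm (section_weight p q n j - 1) \<le> real j / real (q n)"
      by (intro section_weight_deviation[of p n q j] pq) simp
  qed
  moreover have "(\<lambda>n. real j / real (q n)) \<longlonglongrightarrow> 0"
    by (rule tendsto_divide_0[OF tendsto_const filterlim_at_top_imp_at_infinity])
      (rule filterlim_compose[OF filterlim_real_sequentially q])
  ultimately show ?thesis
    by (rule LIM_zero_cancel[OF Lim_null_comparison])
qed

lemma sum_unit_seq:
  "finite J \<Longrightarrow> (\<lambda>i. \<Sum>j\<in>J. b j * unit_seq j i) = (\<lambda>i. if i \<in> J then b i else 0)"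
  by (simp add: unit_seq_def if_distrib sum.delta' cong: if_cong)

lemma unit_seq_in_phi: "unit_seq j \<in> phi"
  unfolding phi_def unit_seq_def by simp

lemma sum_unit_seq_in_phi: "finite J \<Longrightarrow> (\<lambda>i. \<Sum>j\<in>J. b j * unit_seq j i) \<in> phi"
  unfolding sum_unit_seq phi_def by (auto elim: finite_subset[rotated])

lemma Tn_eq_sum_unit_seq:
  "Tn p q n x = (\<lambda>i. \<Sum>j<q n. (section_weight p q n j * x j) * unit_seq j i)"
  unfolding sum_unit_seq[OF finite_lessThan] Tn_eq_weighted
  by (auto simp: section_weight_eq_0)

lemma Tn_in_phi: "Tn p q n x \<in> phi"
  unfolding Tn_eq_sum_unit_seq by (rule sum_unit_seq_in_phi) simp

lemma Tn_add: "Tn p q n (\<lambda>j. x j + y j) = (\<lambda>j. Tn p q n x j + Tn p q n y j)"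
  unfolding Tn_eq_weighted by (simp add: algebra_simps)

lemma Tn_diff: "Tn p q n (\<lambda>j. x j - y j) = (\<lambda>j. Tn p q n x j - Tn p q n y j)"
  unfolding Tn_eq_weighted by (simp add: algebra_simps)

lemma Tn_scale: "Tn p q n (\<lambda>j. c * x j) = (\<lambda>j. c * Tn p q n x j)"
  unfolding Tn_eq_weighted by (simp add: algebra_simps)

lemma section_mean_add:
  "section_mean p q n (\<lambda>j. a j + b j) = section_mean p q n a + section_mean p q n b"
  unfolding section_mean_eq_weighted_sum by (simp add: algebra_simps sum.distrib)

lemma section_mean_scale: "section_mean p q n (\<lambda>j. c * a j) = c * section_mean p q n a"
  unfolding section_mean_eq_weighted_sum by (simp add: algebra_simps sum_distrib_left)

lemma seminorm_on_section_mean: "seminorm_on V (\<lambda>x. norm (section_mean p q n (\<lambda>j. u j * x j)))"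
  unfolding seminorm_on_def
  by (simp add: distrib_left section_mean_add section_mean_scale norm_mult mult.left_commute
      norm_triangle_ineq)

definition clinear_on :: "cseq set \<Rightarrow> (cseq \<Rightarrow> complex) \<Rightarrow> bool" where
  "clinear_on V f \<longleftrightarrow> (\<forall>x\<in>V. \<forall>y\<in>V. f (\<lambda>j. x j + y j) = f x + f y) \<and>
     (\<forall>x\<in>V. \<forall>c. f (\<lambda>j. c * x j) = c * f x)"

lemma clinear_onD:
  "clinear_on V f \<Longrightarrow> x \<in> V \<Longrightarrow> y \<in> V \<Longrightarrow> f (\<lambda>j. x j + y j) = f x + f y"
  "clinear_on V f \<Longrightarrow> x \<in> V \<Longrightarrow> f (\<lambda>j. c * x j) = c * f x"
  unfolding clinear_on_def by blast+

lemma subspace_wD: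
  "subspace_w V \<Longrightarrow> (\<lambda>j. 0) \<in> V"
  "subspace_w V \<Longrightarrow> x \<in> V \<Longrightarrow> y \<in> V \<Longrightarrow> (\<lambda>j. x j + y j) \<in> V"
  "subspace_w V \<Longrightarrow> x \<in> V \<Longrightarrow> (\<lambda>j. c * x j) \<in> V"
  unfolding subspace_w_def by blast+

lemma seminorm_onD:
  "seminorm_on V s \<Longrightarrow> x \<in> V \<Longrightarrow> 0 \<le> s x"
  "seminorm_on V s \<Longrightarrow> x \<in> V \<Longrightarrow> s (\<lambda>j. c * x j) = norm c * s x"
  "seminorm_on V s \<Longrightarrow> x \<in> V \<Longrightarrow> y \<in> V \<Longrightarrow> s (\<lambda>j. x j + y j) \<le> s x + s y"
  unfolding seminorm_on_def by blast+

definition real_subspace :: "cseq set \<Rightarrow> bool" where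
  "real_subspace V \<longleftrightarrow> (\<lambda>j. 0) \<in> V \<and> (\<forall>x\<in>V. \<forall>y\<in>V. (\<lambda>j. x j + y j) \<in> V) \<and>
     (\<forall>x\<in>V. \<forall>t. (\<lambda>j. of_real t * x j) \<in> V)"

definition sublinear_on :: "cseq set \<Rightarrow> (cseq \<Rightarrow> real) \<Rightarrow> bool" where
  "sublinear_on V s \<longleftrightarrow> (\<forall>x\<in>V. \<forall>y\<in>V. s (\<lambda>j. x j + y j) \<le> s x + s y) \<and>
     (\<forall>x\<in>V. \<forall>t\<ge>0. s (\<lambda>j. of_real t * x j) = t * s x)"

definition real_linear_on :: "cseq set \<Rightarrow> (cseq \<Rightarrow> real) \<Rightarrow> bool" where
  "real_linear_on V h \<longleftrightarrow> (\<forall>x\<in>V. \<forall>y\<in>V. h (\<lambda>j. x j + y j) = h x + h y) \<and>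
     (\<forall>x\<in>V. \<forall>t. h (\<lambda>j. of_real t * x j) = t * h x)"

definition dominated_graph :: "cseq set \<Rightarrow> (cseq \<Rightarrow> real) \<Rightarrow> (cseq \<times> real) set \<Rightarrow> bool" where
  "dominated_graph V s G \<longleftrightarrow>
     (\<forall>x a b. (x, a) \<in> G \<longrightarrow> (x, b) \<in> G \<longrightarrow> a = b) \<and>
     (\<forall>x a. (x, a) \<in> G \<longrightarrow> x \<in> V \<and> a \<le> s x) \<and>
     (\<forall>x a y b. (x, a) \<in> G \<longrightarrow> (y, b) \<in> G \<longrightarrow> ((\<lambda>j. x j + y j), a + b) \<in> G) \<and>
     (\<forall>x a t. (x, a) \<in> G \<longrightarrow> ((\<lambda>j. of_real t * x j), t * a) \<in> G)"

lemma real_subspace_add: "real_subspace V \<Longrightarrow> x \<in> V \<Longrightarrow> y \<in> V \<Longrightarrow> (\<lambda>j. x j + y j) \<in> V"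
  and real_subspace_scale: "real_subspace V \<Longrightarrow> x \<in> V \<Longrightarrow> (\<lambda>j. of_real t * x j) \<in> V"
  unfolding real_subspace_def by blast+

lemma real_subspace_diff: "real_subspace V \<Longrightarrow> x \<in> V \<Longrightarrow> y \<in> V \<Longrightarrow> (\<lambda>j. x j - y j) \<in> V"
  using real_subspace_add[of V x "\<lambda>j. of_real (-1) * y j"] real_subspace_scale[of V y "-1"]
  by simp

lemma sublinear_onD:
  "sublinear_on V s \<Longrightarrow> x \<in> V \<Longrightarrow> y \<in> V \<Longrightarrow> s (\<lambda>j. x j + y j) \<le> s x + s y"
  "sublinear_on V s \<Longrightarrow> x \<in> V \<Longrightarrow> t \<ge> 0 \<Longrightarrow> s (\<lambda>j. of_real t * x j) = t * s x"
  unfolding sublinear_on_def by blast+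

lemma dominated_graphD:
  assumes "dominated_graph V s G"
  shows "(x, a) \<in> G \<Longrightarrow> (x, b) \<in> G \<Longrightarrow> a = b"
    and "(x, a) \<in> G \<Longrightarrow> x \<in> V"
    and "(x, a) \<in> G \<Longrightarrow> a \<le> s x"
    and "(x, a) \<in> G \<Longrightarrow> (y, b) \<in> G \<Longrightarrow> ((\<lambda>j. x j + y j), a + b) \<in> G"
    and "(x, a) \<in> G \<Longrightarrow> ((\<lambda>j. of_real t * x j), t * a) \<in> G"
  using assms unfolding dominated_graph_def by blast+

lemma dominated_graph_zero:
  assumes "dominated_graph V s G" "G \<noteq> {}"
  shows "((\<lambda>j. 0), 0) \<in> G"
proof -
  obtain x a where "(x, a) \<in> G" using assms(2) by auto
  from dominated_graphD(5)[OF assms(1) this, of 0] show ?thesis by simp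
qed

lemma dominated_graph_Union:
  assumes C: "C \<noteq> {}" "\<And>G. G \<in> C \<Longrightarrow> dominated_graph V s G"
    and chain: "\<And>G G'. G \<in> C \<Longrightarrow> G' \<in> C \<Longrightarrow> G \<subseteq> G' \<or> G' \<subseteq> G"
  shows "dominated_graph V s (\<Union>C)"
proof -
  have common: "\<exists>G\<in>C. (x, a) \<in> G \<and> (y, b) \<in> G" if "(x, a) \<in> \<Union>C" "(y, b) \<in> \<Union>C" for x a y b
    using that chain by blast
  show ?thesis
    unfolding dominated_graph_def
  proof (intro conjI allI impI)
    fix x a b
    assume "(x, a) \<in> \<Union>C" "(x, b) \<in> \<Union>C"
    then show "a = b" using common dominated_graphD(1)[OF C(2)] by metis
  next
    fix x a
    assume "(x, a) \<in> \<Union>C"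
    then show "x \<in> V" "a \<le> s x" using dominated_graphD(2,3)[OF C(2)] by blast+
  next
    fix x a y b
    assume "(x, a) \<in> \<Union>C" "(y, b) \<in> \<Union>C"
    then show "((\<lambda>j. x j + y j), a + b) \<in> \<Union>C" using common dominated_graphD(4)[OF C(2)] by blast
  next
    fix x a t
    assume "(x, a) \<in> \<Union>C"
    then show "((\<lambda>j. of_real t * x j), t * a) \<in> \<Union>C" using dominated_graphD(5)[OF C(2)] by blast
  qed
qed

lemma dominated_graph_extension_value:
  assumes V: "real_subspace V" and s: "sublinear_on V s"
    and G: "dominated_graph V s G" "G \<noteq> {}" and x0: "x0 \<in> V"
  shows "\<exists>c. (\<forall>y a. (y, a) \<in> G \<longrightarrow> a - s (\<lambda>j. y j - x0 j) \<le> c) \<and>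
             (\<forall>y a. (y, a) \<in> G \<longrightarrow> c \<le> s (\<lambda>j. y j + x0 j) - a)"
proof -
  have sep: "a - s (\<lambda>j. y j - x0 j) \<le> s (\<lambda>j. z j + x0 j) - b"
    if "(y, a) \<in> G" "(z, b) \<in> G" for y a z b
  proof -
    have yz: "y \<in> V" "z \<in> V" using that dominated_graphD(2)[OF G(1)] by auto
    have "a + b \<le> s (\<lambda>j. y j + z j)"
      by (rule dominated_graphD(3)[OF G(1) dominated_graphD(4)[OF G(1) that]])
    also have "(\<lambda>j. y j + z j) = (\<lambda>j. (\<lambda>j. y j - x0 j) j + (\<lambda>j. z j + x0 j) j)"
      by simp
    also have "s \<dots> \<le> s (\<lambda>j. y j - x0 j) + s (\<lambda>j. z j + x0 j)"
      using yz x0 by (intro sublinear_onD(1)[OF s] real_subspace_diff[OF V] real_subspace_add[OF V])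
    finally show ?thesis by simp
  qed
  define L where "L = {a - s (\<lambda>j. y j - x0 j) | y a. (y, a) \<in> G}"
  have L: "L \<noteq> {}" "bdd_above L"
    using G(2) sep dominated_graph_zero[OF G] unfolding L_def bdd_above_def by blast+
  show ?thesis
  proof (intro exI conjI allI impI)
    show "a - s (\<lambda>j. y j - x0 j) \<le> Sup L" if "(y, a) \<in> G" for y a
      using that by (intro cSup_upper L) (auto simp: L_def)
    show "Sup L \<le> s (\<lambda>j. y j + x0 j) - a" if "(y, a) \<in> G" for y a
      using that sep by (intro cSup_least L) (auto simp: L_def)
  qed
qed

definition graph_extension :: "(cseq \<times> real) set \<Rightarrow> cseq \<Rightarrow> real \<Rightarrow> (cseq \<times> real) set" where
  "graph_extension G x0 c = {((\<lambda>j. y j + of_real t * x0 j), a + t * c) | y a t. (y, a) \<in> G}"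

lemma graph_extension_memI:
  "(y, a) \<in> G \<Longrightarrow> ((\<lambda>j. y j + of_real t * x0 j), a + t * c) \<in> graph_extension G x0 c"
  unfolding graph_extension_def by blast

lemma graph_extension_functional:
  assumes G: "dominated_graph V s G" and x0: "\<forall>a. (x0, a) \<notin> G"
    and "(x, a) \<in> graph_extension G x0 c" "(x, b) \<in> graph_extension G x0 c"
  shows "a = b"
proof -
  obtain y1 a1 t1 where 1: "x = (\<lambda>j. y1 j + of_real t1 * x0 j)" "a = a1 + t1 * c" "(y1, a1) \<in> G"
    using assms(3) unfolding graph_extension_def by blast
  obtain y2 a2 t2 where 2: "x = (\<lambda>j. y2 j + of_real t2 * x0 j)" "b = a2 + t2 * c" "(y2, a2) \<in> G"
    using assms(4) unfolding graph_extension_def by blast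
  have eq: "y1 j - y2 j = of_real (t2 - t1) * x0 j" for j
    using fun_cong[OF trans[OF 1(1)[symmetric] 2(1)], of j] by (simp add: algebra_simps)
  show ?thesis
  proof (cases "t1 = t2")
    case True
    then have "y1 = y2" using eq by (simp add: fun_eq_iff)
    then show ?thesis using dominated_graphD(1)[OF G 1(3)] 1 2 True by simp
  next
    case False
    let ?r = "1 / (t2 - t1)"
    have "((\<lambda>j. of_real ?r * (\<lambda>j. y1 j + (\<lambda>j. of_real (-1) * y2 j) j) j), ?r * (a1 + (-1) * a2)) \<in> G"
      by (intro dominated_graphD(4,5)[OF G] 1(3) 2(3))
    moreover have "(\<lambda>j. of_real ?r * (\<lambda>j. y1 j + (\<lambda>j. of_real (-1) * y2 j) j) j) = x0"
    proof
      fix j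
      show "of_real ?r * (y1 j + of_real (-1) * y2 j) = x0 j"
        using eq[of j] False by (simp add: field_simps)
    qed
    ultimately show ?thesis using x0 by simp
  qed
qed

lemma graph_extension_dominated:
  assumes V: "real_subspace V" and s: "sublinear_on V s" and G: "dominated_graph V s G"
    and x0: "x0 \<in> V"
    and c: "\<And>y a. (y, a) \<in> G \<Longrightarrow> a - s (\<lambda>j. y j - x0 j) \<le> c"
           "\<And>y a. (y, a) \<in> G \<Longrightarrow> c \<le> s (\<lambda>j. y j + x0 j) - a"
    and ya: "(y, a) \<in> G"
  shows "a + t * c \<le> s (\<lambda>j. y j + of_real t * x0 j)"
proof (cases t "0::real" rule: linorder_cases)
  case equal
  then show ?thesis using dominated_graphD(3)[OF G ya] by simp
next
  case greater
  let ?y = "\<lambda>j. of_real (1 / t) * y j"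
  have y: "?y \<in> V" using dominated_graphD(2)[OF G ya] by (rule real_subspace_scale[OF V])
  have "(1 / t) * a + c \<le> s (\<lambda>j. ?y j + x0 j)"
    using c(2)[OF dominated_graphD(5)[OF G ya, of "1 / t"]] by linarith
  then have "t * ((1 / t) * a + c) \<le> t * s (\<lambda>j. ?y j + x0 j)"
    using greater by (intro mult_left_mono) auto
  also have "\<dots> = s (\<lambda>j. of_real t * (?y j + x0 j))"
    using greater y x0 by (simp add: sublinear_onD(2)[OF s] real_subspace_add[OF V])
  also have "(\<lambda>j. of_real t * (?y j + x0 j)) = (\<lambda>j. y j + of_real t * x0 j)"
    using greater by (simp add: fun_eq_iff field_simps)
  finally show ?thesis using greater by (simp add: algebra_simps)
next
  case less
  let ?y = "\<lambda>j. of_real (- 1 / t) * y j"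
  have y: "?y \<in> V" using dominated_graphD(2)[OF G ya] by (rule real_subspace_scale[OF V])
  have "(- 1 / t) * a - c \<le> s (\<lambda>j. ?y j - x0 j)"
    using c(1)[OF dominated_graphD(5)[OF G ya, of "- 1 / t"]] by linarith
  then have "- t * ((- 1 / t) * a - c) \<le> - t * s (\<lambda>j. ?y j - x0 j)"
    using less by (intro mult_left_mono) auto
  also have "\<dots> = s (\<lambda>j. of_real (- t) * (?y j - x0 j))"
    using less by (subst sublinear_onD(2)[OF s real_subspace_diff[OF V y x0]]) auto
  also have "(\<lambda>j. of_real (- t) * (?y j - x0 j)) = (\<lambda>j. y j + of_real t * x0 j)"
    using less by (simp add: fun_eq_iff field_simps)
  finally show ?thesis using less by (simp add: algebra_simps)
qed

lemma dominated_graph_graph_extension: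
  assumes V: "real_subspace V" and s: "sublinear_on V s"
    and G: "dominated_graph V s G" and x0: "x0 \<in> V" "\<forall>a. (x0, a) \<notin> G"
    and c: "\<And>y a. (y, a) \<in> G \<Longrightarrow> a - s (\<lambda>j. y j - x0 j) \<le> c"
           "\<And>y a. (y, a) \<in> G \<Longrightarrow> c \<le> s (\<lambda>j. y j + x0 j) - a"
  shows "dominated_graph V s (graph_extension G x0 c)"
  unfolding dominated_graph_def
proof (intro conjI allI impI)
  let ?G' = "graph_extension G x0 c"
  show "a = b" if "(x, a) \<in> ?G'" "(x, b) \<in> ?G'" for x a b
    by (rule graph_extension_functional[OF G x0(2) that])
next
  fix x a
  assume "(x, a) \<in> graph_extension G x0 c"
  then obtain y b t where x: "x = (\<lambda>j. y j + of_real t * x0 j)" "a = b + t * c" "(y, b) \<in> G"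
    unfolding graph_extension_def by blast
  show "x \<in> V"
    unfolding x using dominated_graphD(2)[OF G x(3)] x0(1)
    by (intro real_subspace_add[OF V] real_subspace_scale[OF V])
  show "a \<le> s x"
    unfolding x by (rule graph_extension_dominated[OF V s G x0(1) c x(3)])
next
  fix x a y b
  assume "(x, a) \<in> graph_extension G x0 c" "(y, b) \<in> graph_extension G x0 c"
  then obtain x' a' t y' b' r where xy:
    "x = (\<lambda>j. x' j + of_real t * x0 j)" "a = a' + t * c" "(x', a') \<in> G"
    "y = (\<lambda>j. y' j + of_real r * x0 j)" "b = b' + r * c" "(y', b') \<in> G"
    unfolding graph_extension_def by blast
  have "((\<lambda>j. (\<lambda>j. x' j + y' j) j + of_real (t + r) * x0 j), (a' + b') + (t + r) * c)
      \<in> graph_extension G x0 c"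
    by (rule graph_extension_memI[OF dominated_graphD(4)[OF G xy(3,6)]])
  then show "((\<lambda>j. x j + y j), a + b) \<in> graph_extension G x0 c"
    unfolding xy by (simp add: algebra_simps)
next
  fix x a t
  assume "(x, a) \<in> graph_extension G x0 c"
  then obtain y b r where x: "x = (\<lambda>j. y j + of_real r * x0 j)" "a = b + r * c" "(y, b) \<in> G"
    unfolding graph_extension_def by blast
  have "((\<lambda>j. (\<lambda>j. of_real t * y j) j + of_real (t * r) * x0 j), t * b + (t * r) * c)
      \<in> graph_extension G x0 c"
    by (rule graph_extension_memI[OF dominated_graphD(5)[OF G x(3)]])
  then show "((\<lambda>j. of_real t * x j), t * a) \<in> graph_extension G x0 c"
    unfolding x by (simp add: algebra_simps)
qed

lemma dominated_graph_extend:
  assumes V: "real_subspace V" and s: "sublinear_on V s"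
    and G: "dominated_graph V s G" "G \<noteq> {}" and x0: "x0 \<in> V" "\<forall>a. (x0, a) \<notin> G"
  shows "\<exists>G'. dominated_graph V s G' \<and> G \<subset> G'"
proof -
  obtain c where c: "\<And>y a. (y, a) \<in> G \<Longrightarrow> a - s (\<lambda>j. y j - x0 j) \<le> c"
    "\<And>y a. (y, a) \<in> G \<Longrightarrow> c \<le> s (\<lambda>j. y j + x0 j) - a"
    using dominated_graph_extension_value[OF V s G x0(1)] by blast
  have "G \<subseteq> graph_extension G x0 c"
    using graph_extension_memI[of _ _ G 0 x0 c] by auto
  moreover have "(x0, c) \<in> graph_extension G x0 c"
    using graph_extension_memI[OF dominated_graph_zero[OF G], of 1 x0 c] by simp
  ultimately show ?thesis
    using dominated_graph_graph_extension[OF V s G(1) x0 c] x0(2) by blast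
qed

lemma dominated_graph_of_linear:
  assumes M: "real_subspace M" "M \<subseteq> V" and h: "real_linear_on M h" "\<And>x. x \<in> M \<Longrightarrow> h x \<le> s x"
  shows "dominated_graph V s ((\<lambda>x. (x, h x)) ` M)"
  using assms unfolding dominated_graph_def real_linear_on_def
  by (auto simp: image_iff real_subspace_add[OF M(1)] real_subspace_scale[OF M(1)])

lemma real_linear_on_dominated_graph:
  assumes G: "dominated_graph V s G" and V: "real_subspace V" and H: "\<And>x. x \<in> V \<Longrightarrow> (x, H x) \<in> G"
  shows "real_linear_on V H"
  unfolding real_linear_on_def
proof (intro conjI ballI allI)
  fix x y
  assume "x \<in> V" "y \<in> V"
  then show "H (\<lambda>j. x j + y j) = H x + H y"
    by (intro dominated_graphD(1)[OF G H dominated_graphD(4)[OF G H H]] real_subspace_add[OF V])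
next
  fix x t
  assume "x \<in> V"
  then show "H (\<lambda>j. of_real t * x j) = t * H x"
    by (intro dominated_graphD(1)[OF G H dominated_graphD(5)[OF G H]] real_subspace_scale[OF V])
qed

theorem hahn_banach_real:
  assumes V: "real_subspace V" and s: "sublinear_on V s"
    and M: "real_subspace M" "M \<subseteq> V" and h: "real_linear_on M h" "\<And>x. x \<in> M \<Longrightarrow> h x \<le> s x"
  shows "\<exists>H. real_linear_on V H \<and> (\<forall>x\<in>V. H x \<le> s x) \<and> (\<forall>x\<in>M. H x = h x)"
proof -
  define A where "A = {G. dominated_graph V s G \<and> (\<lambda>x. (x, h x)) ` M \<subseteq> G}"
  have "(\<lambda>x. (x, h x)) ` M \<in> A"
    unfolding A_def using dominated_graph_of_linear[OF M h] by blast
  moreover have "\<Union>C \<in> A" if "C \<noteq> {}" "subset.chain A C" for C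
    using that dominated_graph_Union[of C V s] unfolding A_def subset.chain_def by blast
  ultimately obtain G where G: "G \<in> A" and max: "\<And>G'. G' \<in> A \<Longrightarrow> G \<subseteq> G' \<Longrightarrow> G' = G"
    using subset_Zorn_nonempty[of A] by blast
  have GV: "dominated_graph V s G" "G \<noteq> {}"
    using G real_subspace_def[of M] M(1) unfolding A_def by auto
  have total: "\<exists>a. (x, a) \<in> G" if x: "x \<in> V" for x
  proof (rule ccontr)
    assume "\<nexists>a. (x, a) \<in> G"
    then obtain G' where "dominated_graph V s G'" "G \<subset> G'"
      using dominated_graph_extend[OF V s GV x] by blast
    then show False using max[of G'] G unfolding A_def by blast
  qed
  define H where "H x = (SOME a. (x, a) \<in> G)" for x
  have HG: "(x, H x) \<in> G" if "x \<in> V" for x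
    unfolding H_def using total[OF that] by (rule someI_ex)
  have "H x = h x" if "x \<in> M" for x
    using G HG M(2) that dominated_graphD(1)[OF GV(1)] unfolding A_def by blast
  then show ?thesis
    using real_linear_on_dominated_graph[OF GV(1) V HG] dominated_graphD(3)[OF GV(1) HG] by blast
qed

lemma real_subspace_subspace_w: "subspace_w V \<Longrightarrow> real_subspace V"
  unfolding subspace_w_def real_subspace_def by blast

lemma sublinear_on_seminorm_on: "seminorm_on V s \<Longrightarrow> sublinear_on V s"
  unfolding seminorm_on_def sublinear_on_def by simp

lemma real_linear_on_Re: "clinear_on M g \<Longrightarrow> real_linear_on M (\<lambda>x. Re (g x))"
  unfolding clinear_on_def real_linear_on_def by simp

lemma clinear_on_complexification:
  assumes V: "subspace_w V" and H: "real_linear_on V H"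
  shows "clinear_on V (\<lambda>x. of_real (H x) - \<i> * of_real (H (\<lambda>j. \<i> * x j)))"
proof -
  have add: "H (\<lambda>j. x j + y j) = H x + H y" if "x \<in> V" "y \<in> V" for x y
    using H that unfolding real_linear_on_def by blast
  have scale: "H (\<lambda>j. of_real t * x j) = t * H x" if "x \<in> V" for x t
    using H that unfolding real_linear_on_def by blast
  have cscale: "H (\<lambda>j. c * x j) = Re c * H x + Im c * H (\<lambda>j. \<i> * x j)" if x: "x \<in> V" for x c
  proof -
    have "(\<lambda>j. c * x j) = (\<lambda>j. of_real (Re c) * x j + of_real (Im c) * (\<i> * x j))"
      by (simp add: fun_eq_iff complex_eq_iff)
    then have "H (\<lambda>j. c * x j) = H (\<lambda>j. of_real (Re c) * x j) + H (\<lambda>j. of_real (Im c) * (\<i> * x j))"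
      using x by (simp add: add subspace_wD(3)[OF V])
    also have "\<dots> = Re c * H x + Im c * H (\<lambda>j. \<i> * x j)"
      using scale[OF x, of "Re c"] scale[OF subspace_wD(3)[OF V x], of "Im c" \<i>] by simp
    finally show ?thesis .
  qed
  show ?thesis
    unfolding clinear_on_def
  proof (intro conjI ballI allI)
    fix x y
    assume x: "x \<in> V" and y: "y \<in> V"
    have "H (\<lambda>j. \<i> * (x j + y j)) = H (\<lambda>j. \<i> * x j) + H (\<lambda>j. \<i> * y j)"
      using add[OF subspace_wD(3)[OF V x] subspace_wD(3)[OF V y]] by (simp add: distrib_left)
    then show "of_real (H (\<lambda>j. x j + y j)) - \<i> * of_real (H (\<lambda>j. \<i> * (x j + y j))) =
      of_real (H x) - \<i> * of_real (H (\<lambda>j. \<i> * x j)) + (of_real (H y) - \<i> * of_real (H (\<lambda>j. \<i> * y j)))"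
      unfolding add[OF x y] by (simp add: algebra_simps)
  next
    fix x c
    assume x: "x \<in> V"
    have "H (\<lambda>j. \<i> * (c * x j)) = - Im c * H x + Re c * H (\<lambda>j. \<i> * x j)"
      using cscale[OF x, of "\<i> * c"] by (simp add: mult.assoc)
    then show "of_real (H (\<lambda>j. c * x j)) - \<i> * of_real (H (\<lambda>j. \<i> * (c * x j))) =
      c * (of_real (H x) - \<i> * of_real (H (\<lambda>j. \<i> * x j)))"
      unfolding cscale[OF x, of c] by (simp add: complex_eq_iff algebra_simps)
  qed
qed

lemma clinear_on_norm_le:
  assumes V: "subspace_w V" and s: "seminorm_on V s" and F: "clinear_on V F"
    and Re_le: "\<And>x. x \<in> V \<Longrightarrow> Re (F x) \<le> s x" and x: "x \<in> V"
  shows "norm (F x) \<le> s x"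
proof (cases "F x = 0")
  case False
  define w where "w = cnj (F x) / of_real (norm (F x))"
  have "cnj (F x) * F x = of_real (norm (F x)) * of_real (norm (F x))"
    by (metis complex_norm_square mult.commute of_real_mult power2_eq_square)
  then have "w * F x = of_real (norm (F x))"
    using False by (simp add: w_def)
  then have "norm (F x) = Re (F (\<lambda>j. w * x j))"
    by (simp add: clinear_onD(2)[OF F x])
  also have "\<dots> \<le> s (\<lambda>j. w * x j)"
    using x by (intro Re_le subspace_wD(3)[OF V])
  also have "\<dots> = s x"
    using False seminorm_onD(2)[OF s x, of w] by (simp add: w_def norm_divide)
  finally show ?thesis .
qed (simp add: seminorm_onD(1)[OF s x])

lemma clinear_on_eq_if_Re_eq:
  assumes M: "subspace_w M" and F: "clinear_on M F" and g: "clinear_on M g"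
    and Re_eq: "\<And>x. x \<in> M \<Longrightarrow> Re (F x) = Re (g x)" and x: "x \<in> M"
  shows "F x = g x"
proof -
  have "Re (F (\<lambda>j. \<i> * x j)) = Re (g (\<lambda>j. \<i> * x j))"
    using x by (intro Re_eq subspace_wD(3)[OF M])
  then have "Im (F x) = Im (g x)"
    by (simp add: clinear_onD(2)[OF F x] clinear_onD(2)[OF g x])
  then show ?thesis using Re_eq[OF x] by (simp add: complex_eq_iff)
qed

theorem hahn_banach_complex:
  assumes V: "subspace_w V" and s: "seminorm_on V s"
    and M: "subspace_w M" "M \<subseteq> V" and g: "clinear_on M g" "\<And>x. x \<in> M \<Longrightarrow> norm (g x) \<le> s x"
  shows "\<exists>F. clinear_on V F \<and> (\<forall>x\<in>V. norm (F x) \<le> s x) \<and> (\<forall>x\<in>M. F x = g x)"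
proof -
  have "Re (g x) \<le> s x" if "x \<in> M" for x
    using complex_Re_le_cmod[of "g x"] g(2)[OF that] by linarith
  then obtain H where H: "real_linear_on V H" "\<And>x. x \<in> V \<Longrightarrow> H x \<le> s x" "\<And>x. x \<in> M \<Longrightarrow> H x = Re (g x)"
    using hahn_banach_real[OF real_subspace_subspace_w[OF V] sublinear_on_seminorm_on[OF s]
        real_subspace_subspace_w[OF M(1)] M(2) real_linear_on_Re[OF g(1)]] by blast
  define F where "F x = of_real (H x) - \<i> * of_real (H (\<lambda>j. \<i> * x j))" for x
  have ReF: "Re (F x) = H x" for x
    by (simp add: F_def)
  have F: "clinear_on V F"
    unfolding F_def by (rule clinear_on_complexification[OF V H(1)])
  then have FM: "clinear_on M F"
    using M(2) unfolding clinear_on_def by blast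
  have "norm (F x) \<le> s x" if "x \<in> V" for x
    using that H(2) by (intro clinear_on_norm_le[OF V s F]) (simp_all add: ReF)
  moreover have "F x = g x" if "x \<in> M" for x
    using that H(3) by (intro clinear_on_eq_if_Re_eq[OF M(1) FM g(1)]) (simp_all add: ReF)
  ultimately show ?thesis
    using F by blast
qed

locale fk_space =
  fixes X :: "cseq set" and P :: "nat \<Rightarrow> cseq \<Rightarrow> real"
  assumes FK: "FK_space X P"
begin

lemma subspace: "subspace_w X"
  and seminorm: "seminorm_on X (P k)"
  and coordinate_bound: "\<exists>N C. \<forall>x\<in>X. norm (x j) \<le> C * (\<Sum>k\<le>N. P k x)"
  using FK unfolding FK_space_def by blast+

definition P_tendsto :: "(nat \<Rightarrow> cseq) \<Rightarrow> cseq \<Rightarrow> bool" where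
  "P_tendsto s x \<longleftrightarrow> (\<forall>k. (\<lambda>n. P k (\<lambda>j. s n j - x j)) \<longlonglongrightarrow> 0)"

lemma complete:
  assumes "\<And>n. s n \<in> X" "\<And>k e. e > 0 \<Longrightarrow> \<exists>M. \<forall>m\<ge>M. \<forall>n\<ge>M. P k (\<lambda>j. s m j - s n j) < e"
  shows "\<exists>x\<in>X. P_tendsto s x"
  using FK assms unfolding FK_space_def P_tendsto_def by blast

lemma zero_mem: "(\<lambda>j. 0) \<in> X"
  and add_mem: "x \<in> X \<Longrightarrow> y \<in> X \<Longrightarrow> (\<lambda>j. x j + y j) \<in> X"
  and scale_mem: "x \<in> X \<Longrightarrow> (\<lambda>j. c * x j) \<in> X"
  using subspace_wD[OF subspace] by blast+

lemma diff_mem: "x \<in> X \<Longrightarrow> y \<in> X \<Longrightarrow> (\<lambda>j. x j - y j) \<in> X"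
  using add_mem[of x "\<lambda>j. (-1) * y j"] scale_mem[of y "-1"] by simp

lemma P_nonneg: "x \<in> X \<Longrightarrow> 0 \<le> P k x"
  and P_scale: "x \<in> X \<Longrightarrow> P k (\<lambda>j. c * x j) = norm c * P k x"
  and P_add: "x \<in> X \<Longrightarrow> y \<in> X \<Longrightarrow> P k (\<lambda>j. x j + y j) \<le> P k x + P k y"
  using seminorm_onD[OF seminorm] by blast+

lemma P_zero: "P k (\<lambda>j. 0) = 0"
  using P_scale[OF zero_mem, of k 0] by simp

lemma P_commute: "x \<in> X \<Longrightarrow> y \<in> X \<Longrightarrow> P k (\<lambda>j. x j - y j) = P k (\<lambda>j. y j - x j)"
  using P_scale[OF diff_mem, of y x k "-1"] by simp

lemma P_triangle:
  assumes "x \<in> X" "y \<in> X" "z \<in> X"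
  shows "P k (\<lambda>j. x j - z j) \<le> P k (\<lambda>j. x j - y j) + P k (\<lambda>j. y j - z j)"
  using P_add[OF diff_mem diff_mem, of x y y z k] assms by simp

abbreviation Psum :: "nat \<Rightarrow> cseq \<Rightarrow> real" where
  "Psum N x \<equiv> \<Sum>k\<le>N. P k x"

lemma Psum_nonneg: "x \<in> X \<Longrightarrow> 0 \<le> Psum N x"
  by (simp add: P_nonneg sum_nonneg)

lemma Psum_mono: "x \<in> X \<Longrightarrow> N \<le> N' \<Longrightarrow> Psum N x \<le> Psum N' x"
  by (rule sum_mono2) (auto simp: P_nonneg)

lemma P_le_Psum: "x \<in> X \<Longrightarrow> k \<le> N \<Longrightarrow> P k x \<le> Psum N x"
  using sum_mono2[of "{..N}" "{k}" "\<lambda>k. P k x"] by (simp add: P_nonneg)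

lemma Psum_scale: "x \<in> X \<Longrightarrow> Psum N (\<lambda>j. c * x j) = norm c * Psum N x"
  by (simp add: P_scale sum_distrib_left)

lemma Psum_add: "x \<in> X \<Longrightarrow> y \<in> X \<Longrightarrow> Psum N (\<lambda>j. x j + y j) \<le> Psum N x + Psum N y"
  unfolding sum.distrib[symmetric] by (intro sum_mono P_add)

lemma Psum_tendsto_0: "(\<And>k. (\<lambda>n. P k (s n)) \<longlonglongrightarrow> 0) \<Longrightarrow> (\<lambda>n. Psum N (s n)) \<longlonglongrightarrow> 0"
  using tendsto_sum[of "{..N}" "\<lambda>k n. P k (s n)" "\<lambda>_. 0" sequentially] by simp

lemma seminorm_on_Psum: "C \<ge> 0 \<Longrightarrow> seminorm_on X (\<lambda>x. C * Psum N x)"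
  unfolding seminorm_on_def
  by (auto simp: Psum_nonneg Psum_scale Psum_add distrib_left[symmetric] intro: mult_left_mono)

lemma eq_if_P_eq_0:
  assumes "x \<in> X" "y \<in> X" "\<And>k. P k (\<lambda>j. x j - y j) = 0"
  shows "x = y"
proof
  fix j
  obtain N C where "\<forall>x\<in>X. norm (x j) \<le> C * Psum N x"
    using coordinate_bound by blast
  then have "norm (x j - y j) \<le> C * Psum N (\<lambda>j. x j - y j)"
    using diff_mem[OF assms(1,2)] by fastforce
  then show "x j = y j" using assms(3) by simp
qed

definition seminorm_dominated :: "(cseq \<Rightarrow> real) \<Rightarrow> bool" where
  "seminorm_dominated \<phi> \<longleftrightarrow> (\<exists>N C. \<forall>x\<in>X. \<phi> x \<le> C * Psum N x)"

lemma seminorm_dominatedE: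
  assumes "seminorm_dominated \<phi>"
  obtains N C where "C \<ge> 0" "\<And>x. x \<in> X \<Longrightarrow> \<phi> x \<le> C * Psum N x"
proof -
  obtain N C where NC: "\<And>x. x \<in> X \<Longrightarrow> \<phi> x \<le> C * Psum N x"
    using assms unfolding seminorm_dominated_def by blast
  have "\<phi> x \<le> max C 0 * Psum N x" if "x \<in> X" for x
    using NC[OF that] mult_right_mono[OF max.cobounded1[of C 0] Psum_nonneg[OF that, of N]] by linarith
  then show thesis by (intro that[of "max C 0" N]) auto
qed

lemma seminorm_dominated_mono:
  "seminorm_dominated \<psi> \<Longrightarrow> (\<And>x. x \<in> X \<Longrightarrow> \<phi> x \<le> \<psi> x) \<Longrightarrow> seminorm_dominated \<phi>"
  unfolding seminorm_dominated_def by (meson order_trans)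

lemma seminorm_dominated_P: "seminorm_dominated (P k)"
  unfolding seminorm_dominated_def using P_le_Psum by (intro exI[of _ k] exI[of _ 1]) auto

lemma seminorm_dominated_coordinate: "seminorm_dominated (\<lambda>x. norm (x j))"
  using coordinate_bound unfolding seminorm_dominated_def by blast

lemma seminorm_dominated_scale: "seminorm_dominated \<phi> \<Longrightarrow> a \<ge> 0 \<Longrightarrow> seminorm_dominated (\<lambda>x. a * \<phi> x)"
proof -
  assume "seminorm_dominated \<phi>" "a \<ge> 0"
  then obtain N C where "\<And>x. x \<in> X \<Longrightarrow> a * \<phi> x \<le> a * (C * Psum N x)"
    by (metis seminorm_dominatedE mult_left_mono)
  then show ?thesis unfolding seminorm_dominated_def by (metis mult.assoc)
qed

lemma seminorm_dominated_add:
  assumes "seminorm_dominated \<phi>" "seminorm_dominated \<psi>"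
  shows "seminorm_dominated (\<lambda>x. \<phi> x + \<psi> x)"
proof -
  obtain N1 C1 N2 C2 where 1: "C1 \<ge> 0" "\<And>x. x \<in> X \<Longrightarrow> \<phi> x \<le> C1 * Psum N1 x"
    and 2: "C2 \<ge> 0" "\<And>x. x \<in> X \<Longrightarrow> \<psi> x \<le> C2 * Psum N2 x"
    using assms by (metis seminorm_dominatedE)
  have "\<phi> x + \<psi> x \<le> (C1 + C2) * Psum (max N1 N2) x" if x: "x \<in> X" for x
  proof -
    have "C1 * Psum N1 x \<le> C1 * Psum (max N1 N2) x" "C2 * Psum N2 x \<le> C2 * Psum (max N1 N2) x"
      using 1 2 x by (auto intro!: mult_left_mono Psum_mono)
    then show ?thesis using 1(2)[OF x] 2(2)[OF x] by (simp add: distrib_right)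
  qed
  then show ?thesis unfolding seminorm_dominated_def by blast
qed

lemma seminorm_dominated_sum:
  "finite J \<Longrightarrow> (\<And>j. j \<in> J \<Longrightarrow> seminorm_dominated (\<phi> j)) \<Longrightarrow> seminorm_dominated (\<lambda>x. \<Sum>j\<in>J. \<phi> j x)"
proof (induction J rule: finite_induct)
  case empty
  then show ?case unfolding seminorm_dominated_def by (intro exI[of _ 0]) simp
next
  case (insert a J)
  then show ?case using seminorm_dominated_add[of "\<phi> a"] by simp
qed

lemma seminorm_dominated_tendsto_0:
  assumes "seminorm_dominated \<phi>" "\<And>n. s n \<in> X" "\<And>n. 0 \<le> \<phi> (s n)" "\<And>k. (\<lambda>n. P k (s n)) \<longlonglongrightarrow> 0"
  shows "(\<lambda>n. \<phi> (s n)) \<longlonglongrightarrow> 0"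
proof -
  obtain N C where "\<And>x. x \<in> X \<Longrightarrow> \<phi> x \<le> C * Psum N x"
    using assms(1) unfolding seminorm_dominated_def by blast
  then have "eventually (\<lambda>n. norm (\<phi> (s n)) \<le> C * Psum N (s n)) sequentially"
    using assms(2,3) by (intro always_eventually) auto
  moreover have "(\<lambda>n. C * Psum N (s n)) \<longlonglongrightarrow> 0"
    using tendsto_mult_right_zero[OF Psum_tendsto_0[OF assms(4)]] .
  ultimately show ?thesis by (rule Lim_null_comparison)
qed

lemma cdual_iff: "f \<in> cdual X P \<longleftrightarrow> clinear_on X f \<and> seminorm_dominated (\<lambda>x. norm (f x))"
  unfolding cdual_def clinear_on_def seminorm_dominated_def by blast

lemma cdual_diff:
  assumes f: "f \<in> cdual X P" and x: "x \<in> X" and y: "y \<in> X"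
  shows "f (\<lambda>j. x j - y j) = f x - f y"
proof -
  have lin: "clinear_on X f" using f by (simp add: cdual_iff)
  have "f (\<lambda>j. x j + (\<lambda>j. (-1) * y j) j) = f x + f (\<lambda>j. (-1) * y j)"
    by (rule clinear_onD(1)[OF lin x scale_mem[OF y]])
  also have "f (\<lambda>j. (-1) * y j) = - f y"
    using clinear_onD(2)[OF lin y, of "-1"] by simp
  finally show ?thesis by simp
qed

lemma P_tendsto_add:
  assumes "P_tendsto s x" "P_tendsto t y" "\<And>n. s n \<in> X" "\<And>n. t n \<in> X" "x \<in> X" "y \<in> X"
  shows "P_tendsto (\<lambda>n j. s n j + t n j) (\<lambda>j. x j + y j)"
  unfolding P_tendsto_def
proof
  fix k
  have "\<forall>n. norm (P k (\<lambda>j. s n j + t n j - (x j + y j))) \<le> P k (\<lambda>j. s n j - x j) + P k (\<lambda>j. t n j - y j)"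
  proof
    fix n
    have "(\<lambda>j. s n j + t n j - (x j + y j)) = (\<lambda>j. (\<lambda>j. s n j - x j) j + (\<lambda>j. t n j - y j) j)"
      by (simp add: fun_eq_iff algebra_simps)
    moreover have "P k (\<lambda>j. (\<lambda>j. s n j - x j) j + (\<lambda>j. t n j - y j) j)
        \<le> P k (\<lambda>j. s n j - x j) + P k (\<lambda>j. t n j - y j)"
      using assms(3-6) by (intro P_add diff_mem)
    moreover have "(\<lambda>j. s n j + t n j - (x j + y j)) \<in> X"
      using assms(3-6) by (intro diff_mem add_mem)
    ultimately show "norm (P k (\<lambda>j. s n j + t n j - (x j + y j)))
        \<le> P k (\<lambda>j. s n j - x j) + P k (\<lambda>j. t n j - y j)"
      using P_nonneg by simp
  qed
  moreover have "(\<lambda>n. P k (\<lambda>j. s n j - x j) + P k (\<lambda>j. t n j - y j)) \<longlonglongrightarrow> 0"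
    using assms(1,2) tendsto_add[of "\<lambda>n. P k (\<lambda>j. s n j - x j)" 0 _ "\<lambda>n. P k (\<lambda>j. t n j - y j)" 0]
    unfolding P_tendsto_def by simp
  ultimately show "(\<lambda>n. P k (\<lambda>j. s n j + t n j - (x j + y j))) \<longlonglongrightarrow> 0"
    by (rule Lim_null_comparison[OF always_eventually])
qed

lemma P_tendsto_scale:
  assumes "P_tendsto s x" "\<And>n. s n \<in> X" "x \<in> X"
  shows "P_tendsto (\<lambda>n j. c * s n j) (\<lambda>j. c * x j)"
  unfolding P_tendsto_def
proof
  fix k
  have "P k (\<lambda>j. c * s n j - c * x j) = norm c * P k (\<lambda>j. s n j - x j)" for n
    using P_scale[OF diff_mem[OF assms(2,3)], of k c] by (simp add: algebra_simps)
  then show "(\<lambda>n. P k (\<lambda>j. c * s n j - c * x j)) \<longlonglongrightarrow> 0"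
    using tendsto_mult_right_zero[of "\<lambda>n. P k (\<lambda>j. s n j - x j)" sequentially "norm c"] assms(1)
    unfolding P_tendsto_def by simp
qed

definition fk_dist :: "cseq set \<Rightarrow> cseq \<Rightarrow> cseq \<Rightarrow> real" where
  "fk_dist Y x y =
     (if x \<in> Y \<and> y \<in> Y then (SUP k. min ((1/2)^k) (P k (\<lambda>j. x j - y j))) else 0)"

lemma fk_dist_ge:
  assumes "x \<in> Y" "y \<in> Y"
  shows "min ((1/2)^k) (P k (\<lambda>j. x j - y j)) \<le> fk_dist Y x y"
proof -
  have "bdd_above (range (\<lambda>k. min ((1/2::real)^k) (P k (\<lambda>j. x j - y j))))"
    by (intro bdd_aboveI[of _ 1]) (auto simp: min_le_iff_disj power_le_one)
  then have "min ((1/2)^k) (P k (\<lambda>j. x j - y j)) \<le> (SUP k. min ((1/2)^k) (P k (\<lambda>j. x j - y j)))"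
    by (rule cSUP_upper[OF UNIV_I])
  then show ?thesis
    unfolding fk_dist_def using assms by simp
qed

lemma fk_dist_le:
  "x \<in> Y \<Longrightarrow> y \<in> Y \<Longrightarrow> (\<And>k. min ((1/2)^k) (P k (\<lambda>j. x j - y j)) \<le> b) \<Longrightarrow> fk_dist Y x y \<le> b"
  unfolding fk_dist_def by (simp add: cSUP_least)

lemma P_less_if_fk_dist_less:
  assumes "x \<in> Y" "y \<in> Y" "fk_dist Y x y < min ((1/2)^k) e"
  shows "P k (\<lambda>j. x j - y j) < e"
  using fk_dist_ge[OF assms(1,2), of k] assms(3) by linarith

lemma fk_dist_le_Psum:
  assumes "Y \<subseteq> X" "x \<in> Y" "y \<in> Y"
  shows "fk_dist Y x y \<le> max ((1/2)^K) (Psum K (\<lambda>j. x j - y j))"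
proof (rule fk_dist_le[OF assms(2,3)])
  fix k
  have xy: "(\<lambda>j. x j - y j) \<in> X" using assms by (intro diff_mem) auto
  show "min ((1/2)^k) (P k (\<lambda>j. x j - y j)) \<le> max ((1/2)^K) (Psum K (\<lambda>j. x j - y j))"
  proof (cases "k \<le> K")
    case True
    then show ?thesis using P_le_Psum[OF xy True] by linarith
  next
    case False
    then have "(1/2::real)^k \<le> (1/2)^K" by (intro power_decreasing) auto
    then show ?thesis by linarith
  qed
qed

lemma fk_dist_eq_0_iff:
  assumes Y: "Y \<subseteq> X" and xy: "x \<in> Y" "y \<in> Y"
  shows "fk_dist Y x y = 0 \<longleftrightarrow> x = y"
proof
  assume "fk_dist Y x y = 0"
  have "P k (\<lambda>j. x j - y j) = 0" for k
  proof -
    have "min ((1/2)^k) (P k (\<lambda>j. x j - y j)) \<le> 0"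
      using fk_dist_ge[OF xy, of k] \<open>fk_dist Y x y = 0\<close> by simp
    moreover have "0 \<le> P k (\<lambda>j. x j - y j)" "(0::real) < (1/2)^k"
      using xy Y by (auto intro: P_nonneg diff_mem)
    ultimately show ?thesis by (metis min_le_iff_disj not_le order.antisym)
  qed
  then show "x = y" using eq_if_P_eq_0 xy Y by blast
qed (use xy in \<open>simp add: fk_dist_def P_zero\<close>)

lemma fk_dist_triangle:
  assumes Y: "Y \<subseteq> X" and xyz: "x \<in> Y" "y \<in> Y" "z \<in> Y"
  shows "fk_dist Y x z \<le> fk_dist Y x y + fk_dist Y y z"
proof (rule fk_dist_le[OF xyz(1,3)])
  fix k
  have X: "x \<in> X" "y \<in> X" "z \<in> X" using xyz Y by auto
  have "P k (\<lambda>j. x j - z j) \<le> P k (\<lambda>j. x j - y j) + P k (\<lambda>j. y j - z j)"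
    "0 \<le> P k (\<lambda>j. x j - y j)" "0 \<le> P k (\<lambda>j. y j - z j)" "(0::real) \<le> (1/2)^k"
    using X by (auto intro: P_triangle P_nonneg diff_mem)
  then have "min ((1/2)^k) (P k (\<lambda>j. x j - z j)) \<le>
      min ((1/2)^k) (P k (\<lambda>j. x j - y j)) + min ((1/2)^k) (P k (\<lambda>j. y j - z j))"
    unfolding min_def by (smt (verit))
  also have "\<dots> \<le> fk_dist Y x y + fk_dist Y y z"
    using xyz by (intro add_mono fk_dist_ge)
  finally show "min ((1/2)^k) (P k (\<lambda>j. x j - z j)) \<le> fk_dist Y x y + fk_dist Y y z" .
qed

lemma Metric_space_fk_dist:
  assumes Y: "Y \<subseteq> X"
  shows "Metric_space Y (fk_dist Y)"
proof
  fix x y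
  show "0 \<le> fk_dist Y x y"
  proof (cases "x \<in> Y \<and> y \<in> Y")
    case True
    then have "0 \<le> min ((1/2)^0) (P 0 (\<lambda>j. x j - y j))"
      using P_nonneg[OF diff_mem, of x y 0] Y by auto
    then show ?thesis using fk_dist_ge[of x Y y 0] True by linarith
  qed (auto simp: fk_dist_def)
  show "fk_dist Y x y = fk_dist Y y x"
  proof (cases "x \<in> Y \<and> y \<in> Y")
    case True
    then have "P k (\<lambda>j. x j - y j) = P k (\<lambda>j. y j - x j)" for k
      using Y by (intro P_commute) auto
    then show ?thesis by (simp add: fk_dist_def)
  qed (auto simp: fk_dist_def)
qed (use fk_dist_eq_0_iff fk_dist_triangle Y in auto)

lemma fk_limitin_iff:
  assumes Y: "Y \<subseteq> X" and s: "\<And>n. s n \<in> Y" and x: "x \<in> Y"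
  shows "limitin (Metric_space.mtopology Y (fk_dist Y)) s x sequentially \<longleftrightarrow> P_tendsto s x"
proof -
  interpret Metric_space Y "fk_dist Y" by (rule Metric_space_fk_dist[OF Y])
  have sxX: "(\<lambda>j. s n j - x j) \<in> X" for n using s x Y by (intro diff_mem) auto
  show ?thesis
    unfolding limitin_metric P_tendsto_def
  proof (intro iffI allI impI conjI)
    fix k
    assume lim: "x \<in> Y \<and> (\<forall>\<epsilon>>0. eventually (\<lambda>n. s n \<in> Y \<and> fk_dist Y (s n) x < \<epsilon>) sequentially)"
    show "(\<lambda>n. P k (\<lambda>j. s n j - x j)) \<longlonglongrightarrow> 0"
    proof (rule order_tendstoI)
      show "eventually (\<lambda>n. a < P k (\<lambda>j. s n j - x j)) sequentially" if "a < 0" for a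
        using that P_nonneg[OF sxX] by (auto intro: always_eventually less_le_trans)
      show "eventually (\<lambda>n. P k (\<lambda>j. s n j - x j) < e) sequentially" if "e > 0" for e
        using lim that P_less_if_fk_dist_less[OF s x, of _ k e]
        by (auto elim!: allE[of _ "min ((1/2)^k) e"] eventually_mono)
    qed
  next
    show "x \<in> Y" by (rule x)
  next
    fix e :: real
    assume lim: "\<forall>k. (\<lambda>n. P k (\<lambda>j. s n j - x j)) \<longlonglongrightarrow> 0" and e: "e > 0"
    obtain K where K: "(1/2::real)^K < e" using real_arch_pow_inv[OF e, of "1/2"] by auto
    have "(\<lambda>n. Psum K (\<lambda>j. s n j - x j)) \<longlonglongrightarrow> 0"
      using lim by (intro Psum_tendsto_0) auto
    then have "eventually (\<lambda>n. Psum K (\<lambda>j. s n j - x j) < e) sequentially"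
      using e by (rule order_tendstoD(2))
    then show "eventually (\<lambda>n. s n \<in> Y \<and> fk_dist Y (s n) x < e) sequentially"
    proof (rule eventually_mono)
      fix n
      assume "Psum K (\<lambda>j. s n j - x j) < e"
      then have "max ((1/2)^K) (Psum K (\<lambda>j. s n j - x j)) < e"
        using K by simp
      then show "s n \<in> Y \<and> fk_dist Y (s n) x < e"
        using fk_dist_le_Psum[OF Y s[of n] x, of K] s[of n] by linarith
    qed
  qed
qed

definition fk_closed :: "cseq set \<Rightarrow> bool" where
  "fk_closed Y \<longleftrightarrow> Y \<subseteq> X \<and> (\<forall>s x. (\<forall>n. s n \<in> Y) \<and> x \<in> X \<and> P_tendsto s x \<longrightarrow> x \<in> Y)"

lemma mcomplete_fk_dist:
  assumes Y: "fk_closed Y"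
  shows "Metric_space.mcomplete Y (fk_dist Y)"
proof -
  have YX: "Y \<subseteq> X" using Y by (simp add: fk_closed_def)
  interpret Metric_space Y "fk_dist Y" by (rule Metric_space_fk_dist[OF YX])
  show ?thesis
    unfolding mcomplete_def
  proof (intro allI impI)
    fix s
    assume "MCauchy s"
    then have s: "\<And>n. s n \<in> Y"
      and cauchy: "\<And>e. e > 0 \<Longrightarrow> \<exists>N. \<forall>n n'. N \<le> n \<longrightarrow> N \<le> n' \<longrightarrow> fk_dist Y (s n) (s n') < e"
      unfolding MCauchy_def by auto
    have "\<exists>M. \<forall>m\<ge>M. \<forall>n\<ge>M. P k (\<lambda>j. s m j - s n j) < e" if e: "e > 0" for k e
    proof -
      obtain M where "\<forall>m n. M \<le> m \<longrightarrow> M \<le> n \<longrightarrow> fk_dist Y (s m) (s n) < min ((1/2)^k) e"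
        using cauchy[of "min ((1/2)^k) e"] e by auto
      then show ?thesis using P_less_if_fk_dist_less[OF s s] by blast
    qed
    then obtain x where x: "x \<in> X" "P_tendsto s x"
      using complete[of s] s YX by blast
    then have "x \<in> Y"
      using Y s unfolding fk_closed_def by blast
    then show "\<exists>x. limitin mtopology s x sequentially"
      using fk_limitin_iff[of Y s x] YX s x(2) by blast
  qed
qed

lemma closedin_sublevel:
  assumes Y: "fk_closed Y" "subspace_w Y"
    and \<phi>: "\<And>i. seminorm_on Y (\<phi> i)" "\<And>i. \<exists>N C. \<forall>x\<in>Y. \<phi> i x \<le> C * Psum N x"
  shows "closedin (Metric_space.mtopology Y (fk_dist Y)) {x\<in>Y. \<forall>i. \<phi> i x \<le> b}"
proof -
  have YX: "Y \<subseteq> X" using Y by (simp add: fk_closed_def)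
  interpret Metric_space Y "fk_dist Y" by (rule Metric_space_fk_dist[OF YX])
  show ?thesis
    unfolding metric_closedin_iff_sequentially_closed
  proof (intro conjI allI impI)
    fix s l
    assume "range s \<subseteq> {x\<in>Y. \<forall>i. \<phi> i x \<le> b} \<and> limitin mtopology s l sequentially"
    then have s: "\<And>n. s n \<in> Y" "\<And>n i. \<phi> i (s n) \<le> b" and lim: "limitin mtopology s l sequentially"
      by auto
    have l: "l \<in> Y" using lim by (simp add: limitin_metric)
    have diff: "(\<lambda>j. l j - s n j) \<in> Y" for n
      using subspace_wD(2)[OF Y(2) l subspace_wD(3)[OF Y(2) s(1)[of n], of "-1"]] by simp
    have "\<phi> i l \<le> b" for i
    proof -
      obtain N C where NC: "\<And>x. x \<in> Y \<Longrightarrow> \<phi> i x \<le> C * Psum N x" using \<phi>(2) by blast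
      have le: "\<phi> i l \<le> b + C * Psum N (\<lambda>j. l j - s n j)" for n
      proof -
        have "\<phi> i l \<le> \<phi> i (s n) + \<phi> i (\<lambda>j. l j - s n j)"
          using seminorm_onD(3)[OF \<phi>(1)[of i] s(1)[of n] diff[of n]] by simp
        moreover have "\<phi> i (s n) \<le> b" using s(2) by blast
        ultimately show ?thesis using NC[OF diff[of n]] by linarith
      qed
      have "P_tendsto s l" using fk_limitin_iff[of Y s l] YX s(1) l lim by blast
      moreover have "P k (\<lambda>j. l j - s n j) = P k (\<lambda>j. s n j - l j)" for k n
        using YX s(1)[of n] l by (intro P_commute) auto
      ultimately have "(\<lambda>n. P k (\<lambda>j. l j - s n j)) \<longlonglongrightarrow> 0" for k
        unfolding P_tendsto_def by simp
      then have "(\<lambda>n. b + C * Psum N (\<lambda>j. l j - s n j)) \<longlonglongrightarrow> b + C * 0"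
        by (intro tendsto_add tendsto_const tendsto_mult Psum_tendsto_0)
      then show ?thesis
        using le by (intro tendsto_le[OF _ _ tendsto_const, of sequentially]) auto
    qed
    then show "l \<in> {x\<in>Y. \<forall>i. \<phi> i x \<le> b}" using l by blast
  qed auto
qed

lemma seminorm_le_Psum_if_bounded_near_0:
  assumes Y: "subspace_w Y" "Y \<subseteq> X" and \<phi>: "seminorm_on Y \<phi>" and r: "r > 0"
    and near_0: "\<And>z. z \<in> Y \<Longrightarrow> Psum K z < r \<Longrightarrow> \<phi> z \<le> b" and z: "z \<in> Y"
  shows "\<phi> z \<le> (2 * b / r) * Psum K z"
proof -
  have scaled: "t * \<phi> z \<le> b" if "t > 0" "t * Psum K z < r" for t
  proof -
    have "(\<lambda>j. of_real t * z j) \<in> Y" by (rule subspace_wD(3)[OF Y(1) z])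
    moreover have "Psum K (\<lambda>j. of_real t * z j) = t * Psum K z"
      using Psum_scale[where x=z and N=K and c="of_real t"] z Y(2) that(1) by auto
    ultimately have "\<phi> (\<lambda>j. of_real t * z j) \<le> b" using near_0 that(2) by simp
    then show ?thesis using seminorm_onD(2)[OF \<phi> z, of "of_real t"] that(1) by simp
  qed
  have Psum_z: "0 \<le> Psum K z" using Psum_nonneg z Y(2) by blast
  show ?thesis
  proof (cases "Psum K z = 0")
    case True
    have "\<phi> z \<le> 0"
    proof (rule ccontr)
      assume "\<not> \<phi> z \<le> 0"
      then have "(\<bar>b\<bar> + 1) / \<phi> z * \<phi> z \<le> b"
        using True r by (intro scaled) auto
      then show False using \<open>\<not> \<phi> z \<le> 0\<close> by simp
    qed
    then show ?thesis using True by simp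
  next
    case False
    then have pos: "Psum K z > 0" using Psum_z by simp
    have "r / (2 * Psum K z) * \<phi> z \<le> b"
      using pos r by (intro scaled) (auto simp: field_simps)
    then show ?thesis using pos r by (simp add: field_simps)
  qed
qed

lemma sublevel_set_contains_ball:
  assumes Y: "fk_closed Y" "subspace_w Y"
    and \<phi>: "\<And>i. seminorm_on Y (\<phi> i)" "\<And>i. \<exists>N C. \<forall>x\<in>Y. \<phi> i x \<le> C * Psum N x"
    and bounded: "\<And>x. x \<in> Y \<Longrightarrow> \<exists>B. \<forall>i. \<phi> i x \<le> B"
  shows "\<exists>(m::nat) x0 r. r > 0 \<and> x0 \<in> Y \<and> (\<forall>i. \<phi> i x0 \<le> m) \<and>
    (\<forall>x\<in>Y. fk_dist Y x0 x < r \<longrightarrow> (\<forall>i. \<phi> i x \<le> m))"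
proof -
  have YX: "Y \<subseteq> X" using Y by (simp add: fk_closed_def)
  interpret Metric_space Y "fk_dist Y" by (rule Metric_space_fk_dist[OF YX])
  define E where "E m = {x\<in>Y. \<forall>i. \<phi> i x \<le> real m}" for m :: nat
  have cover: "\<Union>(range E) = Y"
  proof (intro equalityI subsetI)
    fix x
    assume x: "x \<in> Y"
    obtain B where "\<forall>i. \<phi> i x \<le> B" using bounded[OF x] by blast
    moreover obtain m :: nat where "B \<le> real m" using real_arch_simple by blast
    ultimately show "x \<in> \<Union>(range E)" using x unfolding E_def by (auto intro: order_trans)
  qed (auto simp: E_def)
  have "\<exists>m. mtopology interior_of E m \<noteq> {}"
  proof (rule ccontr)
    assume no_interior: "\<nexists>m. mtopology interior_of E m \<noteq> {}"
    have "mtopology interior_of \<Union>(range E) = {}"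
    proof (rule metric_Baire_category_alt[OF mcomplete_fk_dist[OF Y(1)]])
      fix T
      assume "T \<in> range E"
      then obtain m where T: "T = E m" by blast
      have "closedin mtopology (E m)"
        unfolding E_def by (rule closedin_sublevel[where \<phi>=\<phi>, OF Y \<phi>])
      moreover have "mtopology interior_of E m = {}" using no_interior by blast
      ultimately show "closedin mtopology T \<and> mtopology interior_of T = {}"
        unfolding T ..
    qed simp
    then show False
      using cover subspace_wD(1)[OF Y(2)] interior_of_topspace[of mtopology] by simp
  qed
  then obtain m x0 where x0: "x0 \<in> mtopology interior_of E m"
    by blast
  have "openin mtopology (mtopology interior_of E m)"
    by (rule openin_interior_of)
  then obtain r where r: "r > 0" "mball x0 r \<subseteq> mtopology interior_of E m"
    using x0 unfolding openin_mtopology by blast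
  have x0E: "x0 \<in> E m"
    using x0 interior_of_subset[of mtopology "E m"] by auto
  have "x \<in> E m" if "x \<in> Y" "fk_dist Y x0 x < r" for x
  proof -
    have "x \<in> mball x0 r" using that x0E by (simp add: E_def)
    then show ?thesis using r(2) interior_of_subset[of mtopology "E m"] by blast
  qed
  then show ?thesis
    using r(1) x0E unfolding E_def by blast
qed

lemma bounded_near_0_if_pointwise_bounded:
  assumes Y: "fk_closed Y" "subspace_w Y"
    and \<phi>: "\<And>i. seminorm_on Y (\<phi> i)" "\<And>i. \<exists>N C. \<forall>x\<in>Y. \<phi> i x \<le> C * Psum N x"
    and bounded: "\<And>x. x \<in> Y \<Longrightarrow> \<exists>B. \<forall>i. \<phi> i x \<le> B"
  shows "\<exists>r K b. r > 0 \<and> (\<forall>z\<in>Y. Psum K z < r \<longrightarrow> (\<forall>i. \<phi> i z \<le> b))"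
proof -
  have YX: "Y \<subseteq> X" using Y by (simp add: fk_closed_def)
  obtain m :: nat and x0 r where r: "r > 0" and x0: "x0 \<in> Y" "\<And>i. \<phi> i x0 \<le> m"
    and ball: "\<And>x i. x \<in> Y \<Longrightarrow> fk_dist Y x0 x < r \<Longrightarrow> \<phi> i x \<le> m"
    using sublevel_set_contains_ball[where \<phi>=\<phi>, OF Y \<phi> bounded] by blast
  obtain K where K: "(1/2::real)^K < r" using real_arch_pow_inv[OF r, of "1/2"] by auto
  have "\<phi> i z \<le> 2 * real m" if z: "z \<in> Y" "Psum K z < r" for z i
  proof -
    define w where "w = (\<lambda>j. x0 j + z j)"
    have w: "w \<in> Y" unfolding w_def by (rule subspace_wD(2)[OF Y(2) x0(1) z(1)])
    have "Psum K (\<lambda>j. x0 j - w j) = Psum K z"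
      using Psum_scale[where x=z and N=K and c="-1"] z YX by (auto simp: w_def)
    then have "fk_dist Y x0 w < r"
      using fk_dist_le_Psum[OF YX x0(1) w, of K] K z(2) by linarith
    then have "\<phi> i w \<le> real m" using ball w by blast
    moreover have "\<phi> i z \<le> \<phi> i w + \<phi> i (\<lambda>j. (-1) * x0 j)"
      using seminorm_onD(3)[OF \<phi>(1)[of i] w subspace_wD(3)[OF Y(2) x0(1), of "-1"]]
      by (simp add: w_def)
    moreover have "\<phi> i (\<lambda>j. (-1) * x0 j) \<le> real m"
      using seminorm_onD(2)[OF \<phi>(1)[of i] x0(1), of "-1"] x0(2)[of i] by simp
    ultimately show ?thesis by linarith
  qed
  then show ?thesis using r by blast
qed

theorem banach_steinhaus:
  assumes Y: "fk_closed Y" "subspace_w Y"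
    and \<phi>: "\<And>i. seminorm_on Y (\<phi> i)" "\<And>i. \<exists>N C. \<forall>x\<in>Y. \<phi> i x \<le> C * Psum N x"
    and bounded: "\<And>x. x \<in> Y \<Longrightarrow> \<exists>B. \<forall>i. \<phi> i x \<le> B"
  shows "\<exists>N C. \<forall>x\<in>Y. \<forall>i. \<phi> i x \<le> C * Psum N x"
proof -
  obtain r K b where r: "r > 0" and near_0: "\<And>z i. z \<in> Y \<Longrightarrow> Psum K z < r \<Longrightarrow> \<phi> i z \<le> b"
    using bounded_near_0_if_pointwise_bounded[where \<phi>=\<phi>, OF Y \<phi> bounded] by blast
  have YX: "Y \<subseteq> X" using Y(1) by (simp add: fk_closed_def)
  have "\<phi> i x \<le> (2 * b / r) * Psum K x" if "x \<in> Y" for x i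
    by (rule seminorm_le_Psum_if_bounded_near_0[OF Y(2) YX \<phi>(1) r near_0[where i=i] that])
  then show ?thesis by blast
qed

end

primrec hump_sum :: "(nat \<Rightarrow> 'a \<Rightarrow> complex) \<Rightarrow> (nat \<Rightarrow> 'a) \<Rightarrow> nat \<Rightarrow> 'a \<Rightarrow> complex" where
  "hump_sum f x 0 = (\<lambda>w. 0)"
| "hump_sum f x (Suc i) = (\<lambda>w. hump_sum f x i w +
     (if norm (f i (x i)) \<le> norm (hump_sum f x i (x i) + f i (x i)) then 1 else -1) * f i w)"

definition hump_sign :: "(nat \<Rightarrow> 'a \<Rightarrow> complex) \<Rightarrow> (nat \<Rightarrow> 'a) \<Rightarrow> nat \<Rightarrow> complex" where
  "hump_sign f x i = (if norm (f i (x i)) \<le> norm (hump_sum f x i (x i) + f i (x i)) then 1 else -1)"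

lemma hump_sum_Suc: "hump_sum f x (Suc i) w = hump_sum f x i w + hump_sign f x i * f i w"
  unfolding hump_sign_def by simp

lemma hump_sum_eq: "hump_sum f x i w = (\<Sum>l<i. hump_sign f x l * f l w)"
  by (induction i) (simp_all del: hump_sum.simps(2) add: hump_sum_Suc)

lemma norm_hump_sign: "norm (hump_sign f x i) = 1"
  unfolding hump_sign_def by simp

lemma norm_le_hump_sum: "norm (f i (x i)) \<le> norm (hump_sum f x (Suc i) (x i))"
proof (cases "norm (f i (x i)) \<le> norm (hump_sum f x i (x i) + f i (x i))")
  case False
  let ?a = "hump_sum f x i (x i)" and ?b = "f i (x i)"
  have "norm (2 * ?b) \<le> norm (?a + ?b) + norm (?a - ?b)"
    using norm_triangle_ineq4[of "?a + ?b" "?a - ?b"] by simp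
  then have "norm ?b \<le> norm (?a - ?b)" using False by (simp add: norm_mult)
  then show ?thesis unfolding hump_sum_Suc hump_sign_def using False by simp
qed (simp add: hump_sum_Suc hump_sign_def)

lemma geometric_third: "summable (\<lambda>l. (1/3::real)^l)" "(\<Sum>l. (1/3::real)^l) = 3/2"
  using summable_geometric[of "1/3::real"] suminf_geometric[of "1/3::real"] by simp_all

lemma subspace_w_multiples: "subspace_w (range (\<lambda>c j. c * z j))"
  unfolding subspace_w_def
proof (intro conjI ballI allI)
  show "(\<lambda>j. 0) \<in> range (\<lambda>c j. c * z j)" by (rule image_eqI[of _ _ 0]) auto
next
  fix x y
  assume "x \<in> range (\<lambda>c j. c * z j)" "y \<in> range (\<lambda>c j. c * z j)"
  then obtain a b where "x = (\<lambda>j. a * z j)" "y = (\<lambda>j. b * z j)" by blast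
  then show "(\<lambda>j. x j + y j) \<in> range (\<lambda>c j. c * z j)"
    by (intro image_eqI[of _ _ "a + b"]) (auto simp: algebra_simps)
next
  fix x c
  assume "x \<in> range (\<lambda>c j. c * z j)"
  then obtain a where "x = (\<lambda>j. a * z j)" by blast
  then show "(\<lambda>j. c * x j) \<in> range (\<lambda>c j. c * z j)"
    by (intro image_eqI[of _ _ "c * a"]) auto
qed

context fk_space
begin

lemma norming_functional:
  assumes z: "z \<in> X"
  shows "\<exists>f. clinear_on X f \<and> (\<forall>x\<in>X. norm (f x) \<le> P k x) \<and> f z = of_real (P k z)"
proof (cases "P k z = 0")
  case True
  then show ?thesis by (intro exI[of _ "\<lambda>x. 0"]) (simp add: clinear_on_def P_nonneg)
next
  case False
  then have "z \<noteq> (\<lambda>j. 0)" using P_zero by auto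
  then obtain j0 where j0: "z j0 \<noteq> 0" by auto
  define M where "M = range (\<lambda>c. \<lambda>j. c * z j)"
  define g where "g w = w j0 / z j0 * of_real (P k z)" for w :: cseq
  have M: "subspace_w M"
    unfolding M_def by (rule subspace_w_multiples)
  have "clinear_on M g"
    unfolding clinear_on_def g_def by (simp add: add_divide_distrib distrib_right)
  moreover have "norm (g x) \<le> P k x" if x: "x \<in> M" for x
  proof -
    obtain c where c: "x = (\<lambda>j. c * z j)" using x unfolding M_def by blast
    then show ?thesis
      using j0 P_nonneg[OF z] by (simp add: g_def P_scale[OF z] norm_mult)
  qed
  moreover have "M \<subseteq> X" unfolding M_def using scale_mem[OF z] by blast
  ultimately obtain f where "clinear_on X f" "\<forall>x\<in>X. norm (f x) \<le> P k x" "\<forall>x\<in>M. f x = g x"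
    using hahn_banach_complex[OF subspace seminorm M] by blast
  moreover have "z \<in> M" unfolding M_def by (auto intro: image_eqI[of _ _ 1])
  ultimately show ?thesis using j0 by (intro exI[of _ f]) (simp add: g_def)
qed

lemma series_functional_in_cdual:
  assumes f: "\<And>l. clinear_on X (f l)" "\<And>l x. x \<in> X \<Longrightarrow> norm (f l x) \<le> P k x"
    and c: "\<And>l. norm (c l) \<le> (1/3)^l"
  shows "(\<lambda>w. \<Sum>l. c l * f l w) \<in> cdual X P"
    and "\<And>x. x \<in> X \<Longrightarrow> summable (\<lambda>l. norm (c l * f l x))"
proof -
  have term_le: "norm (c l * f l x) \<le> (1/3)^l * P k x" if "x \<in> X" for x l
    unfolding norm_mult using c[of l] f(2)[OF that, of l] by (intro mult_mono) auto
  show summable: "summable (\<lambda>l. norm (c l * f l x))" if "x \<in> X" for x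
    by (rule summable_comparison_test'[OF summable_mult2[OF geometric_third(1), of "P k x"]])
      (simp add: term_le[OF that])
  have add: "(\<Sum>l. c l * f l (\<lambda>j. x j + y j)) = (\<Sum>l. c l * f l x) + (\<Sum>l. c l * f l y)"
    if "x \<in> X" "y \<in> X" for x y
    using suminf_add[OF summable_norm_cancel[OF summable[OF that(1)]] summable_norm_cancel[OF summable[OF that(2)]]]
    by (simp add: clinear_onD(1)[OF f(1) that] distrib_left)
  have scale: "(\<Sum>l. c l * f l (\<lambda>j. a * x j)) = a * (\<Sum>l. c l * f l x)" if "x \<in> X" for x a
    using suminf_mult[OF summable_norm_cancel[OF summable[OF that]], of a]
    by (simp add: clinear_onD(2)[OF f(1) that] algebra_simps)
  have "norm (\<Sum>l. c l * f l x) \<le> 3/2 * P k x" if "x \<in> X" for x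
  proof -
    have "norm (\<Sum>l. c l * f l x) \<le> (\<Sum>l. norm (c l * f l x))"
      by (rule summable_norm[OF summable[OF that]])
    also have "\<dots> \<le> (\<Sum>l. (1/3)^l * P k x)"
      by (rule suminf_le[OF term_le[OF that] summable[OF that] summable_mult2[OF geometric_third(1)]])
    also have "\<dots> = 3/2 * P k x"
      unfolding suminf_mult2[OF geometric_third(1), symmetric] geometric_third(2) ..
    finally show ?thesis .
  qed
  then have "seminorm_dominated (\<lambda>x. norm (\<Sum>l. c l * f l x))"
    using seminorm_dominated_scale[OF seminorm_dominated_P, of "3/2" k]
    by (rule_tac seminorm_dominated_mono) auto
  then show "(\<lambda>w. \<Sum>l. c l * f l w) \<in> cdual X P"
    unfolding cdual_iff clinear_on_def using add scale by blast
qed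

lemma series_functional_tail_le:
  assumes f: "\<And>l. clinear_on X (f l)" "\<And>l x. x \<in> X \<Longrightarrow> norm (f l x) \<le> P k x"
    and c: "\<And>l. norm (c l) \<le> (1/3)^l" and x: "x \<in> X"
  shows "norm (\<Sum>l. c (l + m) * f (l + m) x) \<le> 3/2 * (1/3)^m * P k x"
proof -
  have tail: "summable (\<lambda>l. norm (c (l + m) * f (l + m) x))"
    using summable_ignore_initial_segment[OF series_functional_in_cdual(2)[OF f c x], of m] by simp
  have "norm (\<Sum>l. c (l + m) * f (l + m) x) \<le> (\<Sum>l. norm (c (l + m) * f (l + m) x))"
    by (rule summable_norm[OF tail])
  also have "\<dots> \<le> (\<Sum>l. (1/3)^l * ((1/3)^m * P k x))"
  proof (rule suminf_le[OF _ tail summable_mult2[OF geometric_third(1)]])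
    fix l
    have "norm (c (l + m) * f (l + m) x) \<le> (1/3)^(l + m) * P k x"
      unfolding norm_mult by (rule mult_mono[OF c f(2)[OF x]]) auto
    then show "norm (c (l + m) * f (l + m) x) \<le> (1/3)^l * ((1/3)^m * P k x)"
      by (simp add: power_add)
  qed
  also have "\<dots> = 3/2 * (1/3)^m * P k x"
    unfolding suminf_mult2[OF geometric_third(1), symmetric] geometric_third(2) by simp
  finally show ?thesis .
qed

lemma gliding_hump:
  assumes f: "\<And>i. clinear_on X (f i)" "\<And>i x. x \<in> X \<Longrightarrow> norm (f i x) \<le> P k x"
    and x: "\<And>i. x i \<in> X" "\<And>i. f i (x i) = of_real (P k (x i))"
  shows "\<exists>F\<in>cdual X P. \<forall>i. (1/3)^i * P k (x i) / 2 \<le> norm (F (x i))"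
proof -
  define g where "g l w = of_real ((1/3)^l) * f l w" for l w
  define c where "c l = hump_sign g x l * of_real ((1/3)^l)" for l
  have c: "norm (c l) \<le> (1/3)^l" for l
    by (simp add: c_def norm_mult norm_hump_sign norm_power)
  have cg: "c l * f l w = hump_sign g x l * g l w" for l w
    by (simp add: c_def g_def)
  define F where "F w = (\<Sum>l. c l * f l w)" for w
  have "(1/3)^i * P k (x i) / 2 \<le> norm (F (x i))" for i
  proof -
    have summable: "summable (\<lambda>l. c l * f l (x i))"
      using summable_norm_cancel[OF series_functional_in_cdual(2)[OF f c x(1)]] .
    have "(1/3)^i * P k (x i) = norm (g i (x i))"
      using P_nonneg[OF x(1)] by (simp add: g_def x(2) norm_mult norm_power)
    also have "\<dots> \<le> norm (\<Sum>l<Suc i. c l * f l (x i))"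
      using norm_le_hump_sum[of g i x] by (simp only: hump_sum_eq cg)
    also have "(\<Sum>l<Suc i. c l * f l (x i)) = F (x i) - (\<Sum>l. c (l + Suc i) * f (l + Suc i) (x i))"
      unfolding F_def using suminf_split_initial_segment[OF summable, of "Suc i"] by simp
    also have "norm \<dots> \<le> norm (F (x i)) + norm (\<Sum>l. c (l + Suc i) * f (l + Suc i) (x i))"
      by (rule norm_triangle_ineq4)
    also have "\<dots> \<le> norm (F (x i)) + (1/3)^i * P k (x i) / 2"
      using series_functional_tail_le[OF f c x(1), of "Suc i"] by simp
    finally show ?thesis by simp
  qed
  moreover have "F \<in> cdual X P"
    unfolding F_def by (rule series_functional_in_cdual(1)[OF f c])
  ultimately show ?thesis by blast
qed

theorem P_bounded_if_weakly_bounded: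
  assumes y: "\<And>n. y n \<in> X" and weak: "\<And>f. f \<in> cdual X P \<Longrightarrow> \<exists>B. \<forall>n. norm (f (y n)) \<le> B"
  shows "\<exists>B. \<forall>n. P k (y n) \<le> B"
proof (rule ccontr)
  assume "\<nexists>B. \<forall>n. P k (y n) \<le> B"
  then have "\<forall>i. \<exists>n. 2 * 3^i * (real i + 1) < P k (y n)"
    by (meson not_le)
  then obtain m where m: "\<And>i. 2 * 3^i * (real i + 1) < P k (y (m i))"
    by metis
  have "\<forall>i. \<exists>f. clinear_on X f \<and> (\<forall>x\<in>X. norm (f x) \<le> P k x) \<and> f (y (m i)) = of_real (P k (y (m i)))"
    using norming_functional[OF y] by blast
  then obtain f where "\<And>i. clinear_on X (f i)" "\<And>i x. x \<in> X \<Longrightarrow> norm (f i x) \<le> P k x"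
    "\<And>i. f i (y (m i)) = of_real (P k (y (m i)))"
    by metis
  then obtain F where "F \<in> cdual X P" and F: "\<And>i. (1/3)^i * P k (y (m i)) / 2 \<le> norm (F (y (m i)))"
    using gliding_hump[where f=f and x="\<lambda>i. y (m i)"] y by blast
  then obtain B where B: "\<And>n. norm (F (y n)) \<le> B"
    using weak by blast
  obtain i :: nat where i: "B \<le> real i"
    using real_arch_simple by blast
  have "(1/3::real)^i * (2 * 3^i * (real i + 1)) / 2 = real i + 1"
    by (simp add: power_one_over)
  moreover have "(1/3::real)^i * (2 * 3^i * (real i + 1)) / 2 < (1/3)^i * P k (y (m i)) / 2"
    using m[of i] by (intro divide_strict_right_mono mult_strict_left_mono) auto
  ultimately show False
    using F[of i] B[of "m i"] i by linarith
qed

end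

definition fdual :: "cseq set \<Rightarrow> (nat \<Rightarrow> cseq \<Rightarrow> real) \<Rightarrow> cseq set" where
  "fdual X P = {(\<lambda>j. f (unit_seq j)) | f. f \<in> cdual X P}"

lemma ddual_antimono: "A \<subseteq> B \<Longrightarrow> ddual p q B \<subseteq> ddual p q A"
  unfolding ddual_def by blast

lemma ddual_swap:
  assumes "A \<subseteq> ddual p q B"
  shows "B \<subseteq> ddual p q A"
proof (intro subsetI, unfold ddual_def mem_Collect_eq, intro ballI)
  fix x y
  assume "x \<in> B" "y \<in> A"
  then have "(\<lambda>n. y n * x n) \<in> sigma_s p q" using assms unfolding ddual_def by blast
  then show "(\<lambda>n. x n * y n) \<in> sigma_s p q" by (simp add: mult.commute)
qed

lemma subset_ddual_ddual: "A \<subseteq> ddual p q (ddual p q A)"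
  by (rule ddual_swap) simp

lemma DFplus_eq_ddual_fdual: "DFplus X P p q = ddual p q (fdual X P)"
  unfolding DFplus_def ddual_def fdual_def sigma_s_def by auto

lemma has_Fsigma_iff: "has_Fsigma X P p q \<longleftrightarrow> X \<subseteq> ddual p q (fdual X P)"
  unfolding has_Fsigma_def DFplus_eq_ddual_fdual ..

locale fk_sections = fk_space +
  fixes p q :: "nat \<Rightarrow> nat"
  assumes phi: "phi \<subseteq> X" and pq: "\<And>n. p n < q n" and q: "filterlim q at_top sequentially"
begin

lemma unit_seq_mem: "unit_seq j \<in> X"
  using unit_seq_in_phi phi by blast

lemma sum_unit_seq_mem: "finite J \<Longrightarrow> (\<lambda>i. \<Sum>j\<in>J. b j * unit_seq j i) \<in> X"
  using sum_unit_seq_in_phi phi by blast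

lemma Tn_mem: "Tn p q n x \<in> X"
  using Tn_in_phi phi by blast

lemma clinear_on_sum_unit_seq:
  assumes f: "clinear_on X f" and J: "finite J"
  shows "f (\<lambda>i. \<Sum>j\<in>J. b j * unit_seq j i) = (\<Sum>j\<in>J. b j * f (unit_seq j))"
  using J
proof (induction J rule: finite_induct)
  case empty
  show ?case using clinear_onD(2)[OF f zero_mem, of 0] by simp
next
  case (insert a J)
  have "f (\<lambda>i. (\<lambda>i. b a * unit_seq a i) i + (\<lambda>i. \<Sum>j\<in>J. b j * unit_seq j i) i)
      = f (\<lambda>i. b a * unit_seq a i) + f (\<lambda>i. \<Sum>j\<in>J. b j * unit_seq j i)"
    using insert(1) by (intro clinear_onD(1)[OF f] scale_mem unit_seq_mem sum_unit_seq_mem)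
  then show ?case
    using insert by (simp add: clinear_onD(2)[OF f unit_seq_mem])
qed

lemma P_sum_unit_seq_le:
  assumes J: "finite J"
  shows "P k (\<lambda>i. \<Sum>j\<in>J. b j * unit_seq j i) \<le> (\<Sum>j\<in>J. norm (b j) * P k (unit_seq j))"
  using J
proof (induction J rule: finite_induct)
  case empty
  then show ?case using P_zero by simp
next
  case (insert a J)
  have "P k (\<lambda>i. (\<lambda>i. b a * unit_seq a i) i + (\<lambda>i. \<Sum>j\<in>J. b j * unit_seq j i) i)
      \<le> P k (\<lambda>i. b a * unit_seq a i) + P k (\<lambda>i. \<Sum>j\<in>J. b j * unit_seq j i)"
    using insert(1) by (intro P_add scale_mem unit_seq_mem sum_unit_seq_mem)
  then show ?case
    using insert by (simp add: P_scale[OF unit_seq_mem])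
qed

lemma clinear_on_Tn:
  assumes f: "clinear_on X f"
  shows "f (Tn p q n x) = section_mean p q n (\<lambda>j. x j * f (unit_seq j))"
  unfolding Tn_eq_sum_unit_seq section_mean_eq_weighted_sum
  using clinear_on_sum_unit_seq[OF f, of "{..<q n}" "\<lambda>j. section_weight p q n j * x j"]
  by (simp add: mult.assoc)

lemma seminorm_dominated_P_Tn: "seminorm_dominated (\<lambda>x. P k (Tn p q n x))"
proof (rule seminorm_dominated_mono)
  show "seminorm_dominated (\<lambda>x. \<Sum>j<q n. (norm (section_weight p q n j) * P k (unit_seq j)) * norm (x j))"
    by (intro seminorm_dominated_sum seminorm_dominated_scale seminorm_dominated_coordinate)
      (auto intro!: mult_nonneg_nonneg P_nonneg unit_seq_mem)
  show "P k (Tn p q n x) \<le> (\<Sum>j<q n. (norm (section_weight p q n j) * P k (unit_seq j)) * norm (x j))" for x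
    unfolding Tn_eq_sum_unit_seq
    using P_sum_unit_seq_le[of "{..<q n}" k "\<lambda>j. section_weight p q n j * x j"]
    by (simp add: norm_mult algebra_simps)
qed

lemma seminorm_dominated_section_mean:
  "seminorm_dominated (\<lambda>x. norm (section_mean p q n (\<lambda>j. u j * x j)))"
proof (rule seminorm_dominated_mono)
  show "seminorm_dominated (\<lambda>x. \<Sum>j<q n. norm (section_weight p q n j * u j) * norm (x j))"
    by (intro seminorm_dominated_sum seminorm_dominated_scale seminorm_dominated_coordinate) auto
  show "norm (section_mean p q n (\<lambda>j. u j * x j)) \<le> (\<Sum>j<q n. norm (section_weight p q n j * u j) * norm (x j))"
    for x
    unfolding section_mean_eq_weighted_sum
    using norm_sum[of "\<lambda>j. section_weight p q n j * (u j * x j)" "{..<q n}"]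
    by (simp add: norm_mult mult.assoc)
qed

abbreviation DSX :: "cseq set" where "DSX \<equiv> DS X P p q"

lemma DS_iff: "x \<in> DSX \<longleftrightarrow> x \<in> X \<and> P_tendsto (\<lambda>n. Tn p q n x) x"
  unfolding DS_def P_tendsto_def by simp

lemma DS_subset: "DSX \<subseteq> X"
  unfolding DS_def by blast

lemma subspace_DS: "subspace_w DSX"
  unfolding subspace_w_def
proof (intro conjI ballI allI)
  show "(\<lambda>j. 0) \<in> DSX"
    unfolding DS_iff by (simp add: zero_mem P_tendsto_def Tn_eq_weighted P_zero)
next
  fix x y
  assume "x \<in> DSX" "y \<in> DSX"
  then show "(\<lambda>j. x j + y j) \<in> DSX"
    using P_tendsto_add[of "\<lambda>n. Tn p q n x" x "\<lambda>n. Tn p q n y" y]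
    unfolding DS_iff by (simp add: add_mem Tn_mem Tn_add)
next
  fix x c
  assume "x \<in> DSX"
  then show "(\<lambda>j. c * x j) \<in> DSX"
    using P_tendsto_scale[of "\<lambda>n. Tn p q n x" x c]
    unfolding DS_iff by (simp add: scale_mem Tn_mem Tn_scale)
qed

lemma unit_seq_DS: "unit_seq j \<in> DSX"
  unfolding DS_iff P_tendsto_def
proof (intro conjI allI unit_seq_mem)
  fix k
  have "Tn p q n (unit_seq j) = (\<lambda>i. section_weight p q n j * unit_seq j i)" for n
    by (auto simp: Tn_eq_weighted unit_seq_def)
  then have "P k (\<lambda>i. Tn p q n (unit_seq j) i - unit_seq j i) = norm (section_weight p q n j - 1) * P k (unit_seq j)"
    for n
    using P_scale[OF unit_seq_mem, of k "section_weight p q n j - 1" j] by (simp add: algebra_simps)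
  moreover have "(\<lambda>n. norm (section_weight p q n j - 1) * P k (unit_seq j)) \<longlonglongrightarrow> norm (1 - 1 :: complex) * P k (unit_seq j)"
    by (intro tendsto_intros section_weight_tendsto_1 pq q)
  ultimately show "(\<lambda>n. P k (\<lambda>i. Tn p q n (unit_seq j) i - unit_seq j i)) \<longlonglongrightarrow> 0"
    by simp
qed

lemma DS_subset_DW: "DSX \<subseteq> DW X P p q"
proof
  fix x
  assume "x \<in> DSX"
  then have x: "x \<in> X" and lim: "P_tendsto (\<lambda>n. Tn p q n x) x" unfolding DS_iff by auto
  have "(\<lambda>n. f (Tn p q n x)) \<longlonglongrightarrow> f x" if f: "f \<in> cdual X P" for f
  proof -
    have "seminorm_dominated (\<lambda>x. norm (f x))" using f by (simp add: cdual_iff)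
    then have "(\<lambda>n. norm (f (\<lambda>j. Tn p q n x j - x j))) \<longlonglongrightarrow> 0"
      by (rule seminorm_dominated_tendsto_0[OF _ diff_mem[OF Tn_mem x]])
        (use lim in \<open>simp_all add: P_tendsto_def\<close>)
    then have "(\<lambda>n. f (Tn p q n x) - f x) \<longlonglongrightarrow> 0"
      by (simp add: cdual_diff[OF f Tn_mem x] tendsto_norm_zero_iff)
    then show ?thesis by (rule LIM_zero_cancel)
  qed
  then show "x \<in> DW X P p q" unfolding DW_def using x by blast
qed

lemma fdual_subset_ddual_DW: "fdual X P \<subseteq> ddual p q (DW X P p q)"
proof
  fix u
  assume "u \<in> fdual X P"
  then obtain f where f: "f \<in> cdual X P" and u: "u = (\<lambda>j. f (unit_seq j))"
    unfolding fdual_def by blast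
  have "(\<lambda>n. u n * y n) \<in> sigma_s p q" if "y \<in> DW X P p q" for y
  proof -
    have "convergent (\<lambda>n. f (Tn p q n y))"
      using that f unfolding DW_def convergent_def by blast
    then show ?thesis
      using clinear_on_Tn[of f] f unfolding sigma_s_iff cdual_iff u by (simp add: mult.commute)
  qed
  then show "u \<in> ddual p q (DW X P p q)" unfolding ddual_def by blast
qed

lemma fdual_subset_ddual_DF: "fdual X P \<subseteq> ddual p q (DF X P p q)"
  by (rule ddual_swap) (auto simp: DF_def DFplus_eq_ddual_fdual)

lemma convergent_Tn_if_has_Fsigma:
  assumes H: "has_Fsigma X P p q" and x: "x \<in> X" and f: "f \<in> cdual X P"
  shows "convergent (\<lambda>n. f (Tn p q n x))"
proof -
  have "\<forall>y\<in>fdual X P. (\<lambda>n. x n * y n) \<in> sigma_s p q"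
    using H x unfolding has_Fsigma_iff ddual_def by blast
  moreover have "(\<lambda>j. f (unit_seq j)) \<in> fdual X P" using f unfolding fdual_def by blast
  ultimately have "(\<lambda>j. x j * f (unit_seq j)) \<in> sigma_s p q" by simp
  then show ?thesis
    using f by (simp add: sigma_s_iff clinear_on_Tn cdual_iff)
qed

lemma seminorm_on_P_Tn: "seminorm_on X (\<lambda>x. P k (Tn p q n x))"
  unfolding seminorm_on_def Tn_add Tn_scale
  by (simp add: P_nonneg P_add P_scale Tn_mem)

lemma Tn_equicontinuous:
  assumes H: "has_Fsigma X P p q"
  shows "\<exists>N C. \<forall>x\<in>X. \<forall>n. P k (Tn p q n x) \<le> C * Psum N x"
proof (rule banach_steinhaus[OF _ subspace seminorm_on_P_Tn])
  show "fk_closed X" unfolding fk_closed_def by blast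
  show "\<exists>N C. \<forall>x\<in>X. P k (Tn p q n x) \<le> C * Psum N x" for n
    using seminorm_dominated_P_Tn unfolding seminorm_dominated_def .
  show "\<exists>B. \<forall>n. P k (Tn p q n x) \<le> B" if x: "x \<in> X" for x
    using convergent_Tn_if_has_Fsigma[OF H x] convergent_norm_bounded
    by (intro P_bounded_if_weakly_bounded Tn_mem) blast
qed

lemma P_Tn_diff_le:
  assumes "x \<in> X" "y \<in> X"
  shows "P k (\<lambda>j. Tn p q n x j - x j) \<le>
    P k (Tn p q n (\<lambda>j. x j - y j)) + P k (\<lambda>j. Tn p q n y j - y j) + P k (\<lambda>j. y j - x j)"
proof -
  have "P k (\<lambda>j. Tn p q n x j - x j) \<le> P k (\<lambda>j. Tn p q n x j - Tn p q n y j) + P k (\<lambda>j. Tn p q n y j - x j)"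
    using assms by (intro P_triangle Tn_mem)
  moreover have "P k (\<lambda>j. Tn p q n y j - x j) \<le> P k (\<lambda>j. Tn p q n y j - y j) + P k (\<lambda>j. y j - x j)"
    using assms by (intro P_triangle Tn_mem)
  ultimately show ?thesis by (simp add: Tn_diff)
qed

lemma Tn_P_tendsto_of_DS_limit:
  assumes H: "has_Fsigma X P p q"
    and s: "\<And>n. s n \<in> X" "\<And>n. P_tendsto (\<lambda>m. Tn p q m (s n)) (s n)"
    and x: "x \<in> X" and lim: "P_tendsto s x"
  shows "(\<lambda>n. P k (\<lambda>j. Tn p q n x j - x j)) \<longlonglongrightarrow> 0"
proof (rule order_tendstoI)
  show "eventually (\<lambda>n. a < P k (\<lambda>j. Tn p q n x j - x j)) sequentially" if "a < 0" for a
    using less_le_trans[OF that P_nonneg[OF diff_mem[OF Tn_mem x]]] by (simp add: always_eventually)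
next
  fix e :: real
  assume e: "e > 0"
  obtain N C where NC: "\<And>y n. y \<in> X \<Longrightarrow> P k (Tn p q n y) \<le> C * Psum N y"
    using Tn_equicontinuous[OF H] by blast
  have "(\<lambda>m. C * Psum N (\<lambda>j. x j - s m j)) \<longlonglongrightarrow> C * 0"
    using lim P_commute[OF s(1) x] unfolding P_tendsto_def
    by (intro tendsto_mult tendsto_const Psum_tendsto_0) simp
  then have "eventually (\<lambda>m. C * Psum N (\<lambda>j. x j - s m j) < e/3) sequentially"
    using e by (intro order_tendstoD(2)) auto
  moreover have "eventually (\<lambda>m. P k (\<lambda>j. s m j - x j) < e/3) sequentially"
    using lim e unfolding P_tendsto_def by (intro order_tendstoD(2)) auto
  ultimately have "eventually (\<lambda>m. C * Psum N (\<lambda>j. x j - s m j) < e/3 \<and> P k (\<lambda>j. s m j - x j) < e/3)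
      sequentially"
    by (rule eventually_conj)
  then obtain m where m: "C * Psum N (\<lambda>j. x j - s m j) < e/3" "P k (\<lambda>j. s m j - x j) < e/3"
    unfolding eventually_sequentially by blast
  have "(\<lambda>n. P k (\<lambda>j. Tn p q n (s m) j - s m j)) \<longlonglongrightarrow> 0"
    using s(2)[of m] unfolding P_tendsto_def by blast
  then have "eventually (\<lambda>n. P k (\<lambda>j. Tn p q n (s m) j - s m j) < e/3) sequentially"
    using e by (intro order_tendstoD(2)) auto
  then show "eventually (\<lambda>n. P k (\<lambda>j. Tn p q n x j - x j) < e) sequentially"
  proof (rule eventually_mono)
    fix n
    assume "P k (\<lambda>j. Tn p q n (s m) j - s m j) < e/3"
    then show "P k (\<lambda>j. Tn p q n x j - x j) < e"
      using P_Tn_diff_le[OF x s(1)[of m], of k n] NC[OF diff_mem[OF x s(1)[of m]], of n] m by linarith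
  qed
qed

lemma fk_closed_DS:
  assumes H: "has_Fsigma X P p q"
  shows "fk_closed DSX"
  unfolding fk_closed_def
proof (intro conjI allI impI DS_subset)
  fix s x
  assume "(\<forall>n. s n \<in> DSX) \<and> x \<in> X \<and> P_tendsto s x"
  then show "x \<in> DSX"
    using Tn_P_tendsto_of_DS_limit[OF H] unfolding DS_iff P_tendsto_def by blast
qed

lemma section_mean_unit_seq_tendsto: "(\<lambda>n. section_mean p q n (\<lambda>i. u i * unit_seq j i)) \<longlonglongrightarrow> u j"
proof -
  have "section_mean p q n (\<lambda>i. u i * unit_seq j i) = section_weight p q n j * u j" for n
    unfolding section_mean_eq_weighted_sum unit_seq_def
    by (simp add: if_distrib sum.delta' section_weight_eq_0 cong: if_cong)
  then show ?thesis
    using tendsto_mult_right[OF section_weight_tendsto_1[OF pq q], of j "u j"] by simp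
qed

lemma section_mean_equicontinuous_on_DS:
  assumes H: "has_Fsigma X P p q" and u: "u \<in> ddual p q DSX"
  shows "\<exists>N C. \<forall>x\<in>DSX. \<forall>n. norm (section_mean p q n (\<lambda>j. u j * x j)) \<le> C * Psum N x"
proof (rule banach_steinhaus[OF fk_closed_DS[OF H] subspace_DS])
  show "seminorm_on DSX (\<lambda>x. norm (section_mean p q n (\<lambda>j. u j * x j)))" for n
    by (rule seminorm_on_section_mean)
  show "\<exists>N C. \<forall>x\<in>DSX. norm (section_mean p q n (\<lambda>j. u j * x j)) \<le> C * Psum N x" for n
    using seminorm_dominated_section_mean[of n u] DS_subset unfolding seminorm_dominated_def by blast
  show "\<exists>B. \<forall>n. norm (section_mean p q n (\<lambda>j. u j * x j)) \<le> B" if "x \<in> DSX" for x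
    using u that unfolding ddual_def sigma_s_iff
    by (auto simp: mult.commute intro!: convergent_norm_bounded)
qed

lemma limit_functional_on_DS:
  assumes H: "has_Fsigma X P p q" and u: "u \<in> ddual p q DSX"
  defines "g \<equiv> \<lambda>x. lim (\<lambda>n. section_mean p q n (\<lambda>j. u j * x j))"
  shows "\<And>x. x \<in> DSX \<Longrightarrow> (\<lambda>n. section_mean p q n (\<lambda>j. u j * x j)) \<longlonglongrightarrow> g x"
    and "clinear_on DSX g"
    and "\<exists>N C. C \<ge> 0 \<and> (\<forall>x\<in>DSX. norm (g x) \<le> C * Psum N x)"
proof -
  show lim: "(\<lambda>n. section_mean p q n (\<lambda>j. u j * x j)) \<longlonglongrightarrow> g x" if "x \<in> DSX" for x
    using u that unfolding ddual_def sigma_s_iff g_def by (auto simp: convergent_LIMSEQ_iff mult.commute)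
  show "clinear_on DSX g"
    unfolding clinear_on_def
  proof (intro conjI ballI allI)
    fix x y
    assume "x \<in> DSX" "y \<in> DSX"
    then have "(\<lambda>n. section_mean p q n (\<lambda>j. u j * (x j + y j))) \<longlonglongrightarrow> g x + g y"
      using tendsto_add[OF lim lim] by (simp add: distrib_left section_mean_add)
    moreover have "(\<lambda>j. x j + y j) \<in> DSX"
      using \<open>x \<in> DSX\<close> \<open>y \<in> DSX\<close> subspace_DS by (simp add: subspace_wD)
    ultimately show "g (\<lambda>j. x j + y j) = g x + g y" using lim LIMSEQ_unique by blast
  next
    fix x c
    assume "x \<in> DSX"
    then have "(\<lambda>n. section_mean p q n (\<lambda>j. u j * (c * x j))) \<longlonglongrightarrow> c * g x"
      using tendsto_mult_left[OF lim, of x c] by (simp add: mult.left_commute section_mean_scale)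
    moreover have "(\<lambda>j. c * x j) \<in> DSX"
      using \<open>x \<in> DSX\<close> subspace_DS by (simp add: subspace_wD)
    ultimately show "g (\<lambda>j. c * x j) = c * g x" using lim LIMSEQ_unique by blast
  qed
  obtain N C where NC: "\<And>x n. x \<in> DSX \<Longrightarrow> norm (section_mean p q n (\<lambda>j. u j * x j)) \<le> C * Psum N x"
    using section_mean_equicontinuous_on_DS[OF H u] by blast
  have "norm (g x) \<le> max C 0 * Psum N x" if x: "x \<in> DSX" for x
  proof (rule LIMSEQ_le_const2[OF tendsto_norm[OF lim[OF x]]])
    have "C * Psum N x \<le> max C 0 * Psum N x"
      using x DS_subset Psum_nonneg by (intro mult_right_mono) auto
    then show "\<exists>M. \<forall>n\<ge>M. norm (section_mean p q n (\<lambda>j. u j * x j)) \<le> max C 0 * Psum N x"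
      using NC[OF x] by (meson order_trans)
  qed
  then show "\<exists>N C. C \<ge> 0 \<and> (\<forall>x\<in>DSX. norm (g x) \<le> C * Psum N x)"
    by (intro exI[of _ N] exI[of _ "max C 0"]) auto
qed

lemma ddual_DS_subset_fdual:
  assumes H: "has_Fsigma X P p q"
  shows "ddual p q DSX \<subseteq> fdual X P"
proof
  fix u
  assume u: "u \<in> ddual p q DSX"
  define g where "g = (\<lambda>x. lim (\<lambda>n. section_mean p q n (\<lambda>j. u j * x j)))"
  have g: "clinear_on DSX g"
    unfolding g_def by (rule limit_functional_on_DS(2)[OF H u])
  obtain N C where C: "C \<ge> 0" and g_bound: "\<And>x. x \<in> DSX \<Longrightarrow> norm (g x) \<le> C * Psum N x"
    using limit_functional_on_DS(3)[OF H u] unfolding g_def by blast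
  obtain F where F: "clinear_on X F" "\<And>x. x \<in> X \<Longrightarrow> norm (F x) \<le> C * Psum N x"
    and Fg: "\<And>x. x \<in> DSX \<Longrightarrow> F x = g x"
    using hahn_banach_complex[OF subspace seminorm_on_Psum[OF C] subspace_DS DS_subset g g_bound]
    by blast
  have "F \<in> cdual X P"
    using F unfolding cdual_iff seminorm_dominated_def by blast
  moreover have "F (unit_seq j) = u j" for j
    using Fg[OF unit_seq_DS] limit_functional_on_DS(1)[OF H u unit_seq_DS]
      section_mean_unit_seq_tendsto LIMSEQ_unique unfolding g_def by metis
  ultimately show "u \<in> fdual X P"
    unfolding fdual_def by (auto intro!: exI[of _ F])
qed

end

lemma DF_eq_if_has_Fsigma: "has_Fsigma X P p q \<Longrightarrow> DF X P p q = X"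
  unfolding DF_def has_Fsigma_def by blast

lemma ddual_characterisations:
  assumes S_W: "S \<subseteq> W" and S_X: "S \<subseteq> X"
    and F_W: "F \<subseteq> ddual p q W" and F_D: "F \<subseteq> ddual p q D"
    and S_F: "X \<subseteq> ddual p q F \<Longrightarrow> ddual p q S \<subseteq> F"
    and D_X: "X \<subseteq> ddual p q F \<Longrightarrow> D = X"
  shows "(X \<subseteq> ddual p q F \<longleftrightarrow> X \<subseteq> ddual p q (ddual p q S)) \<and>
         (X \<subseteq> ddual p q F \<longleftrightarrow> X \<subseteq> ddual p q (ddual p q W)) \<and>
         (X \<subseteq> ddual p q F \<longleftrightarrow> X \<subseteq> ddual p q (ddual p q D)) \<and>
         (X \<subseteq> ddual p q F \<longleftrightarrow> ddual p q X = ddual p q S) \<and>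
         (X \<subseteq> ddual p q F \<longleftrightarrow> ddual p q X = ddual p q D)"
proof -
  have W_F: "ddual p q (ddual p q W) \<subseteq> ddual p q F"
    using ddual_antimono[OF F_W] .
  have S_W2: "ddual p q (ddual p q S) \<subseteq> ddual p q (ddual p q W)"
    using ddual_antimono[OF ddual_antimono[OF S_W]] .
  have D_F: "ddual p q (ddual p q D) \<subseteq> ddual p q F"
    using ddual_antimono[OF F_D] .
  have X_X: "X \<subseteq> ddual p q (ddual p q X)"
    by (rule subset_ddual_ddual)
  have H_S: "X \<subseteq> ddual p q (ddual p q S)" if "X \<subseteq> ddual p q F"
    using that ddual_antimono[OF S_F[OF that]] by blast
  have H_dual: "ddual p q X = ddual p q S" if "X \<subseteq> ddual p q F"
    using ddual_antimono[OF S_X] S_F[OF that] ddual_swap[OF that] by blast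
  have "X \<subseteq> ddual p q F \<longleftrightarrow> X \<subseteq> ddual p q (ddual p q S)"
    using H_S S_W2 W_F by blast
  moreover have "X \<subseteq> ddual p q F \<longleftrightarrow> X \<subseteq> ddual p q (ddual p q W)"
    using H_S S_W2 W_F by blast
  moreover have "X \<subseteq> ddual p q F \<longleftrightarrow> X \<subseteq> ddual p q (ddual p q D)"
    using D_X X_X D_F by auto
  moreover have "X \<subseteq> ddual p q F \<longleftrightarrow> ddual p q X = ddual p q S"
    using H_dual X_X S_W2 W_F by (metis subset_trans)
  moreover have "X \<subseteq> ddual p q F \<longleftrightarrow> ddual p q X = ddual p q D"
    using D_X X_X D_F by (metis subset_trans)
  ultimately show ?thesis by blast
qed

theorem mainTheorem15:
  fixes X :: "cseq set" and P :: "nat \<Rightarrow> cseq \<Rightarrow> real" and p q :: "nat \<Rightarrow> nat"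
  assumes "FK_space X P"
    and "phi \<subseteq> X"
    and "\<And>n. p n < q n"
    and "filterlim q at_top sequentially"
  shows "(has_Fsigma X P p q \<longleftrightarrow> X \<subseteq> ddual p q (ddual p q (DS X P p q))) \<and>
         (has_Fsigma X P p q \<longleftrightarrow> X \<subseteq> ddual p q (ddual p q (DW X P p q))) \<and>
         (has_Fsigma X P p q \<longleftrightarrow> X \<subseteq> ddual p q (ddual p q (DF X P p q))) \<and>
         (has_Fsigma X P p q \<longleftrightarrow> ddual p q X = ddual p q (DS X P p q)) \<and>
         (has_Fsigma X P p q \<longleftrightarrow> ddual p q X = ddual p q (DF X P p q))"
proof -
  interpret fk_sections X P p q
    using assms by unfold_locales (simp_all add: fk_space_def)
  show ?thesis
    unfolding has_Fsigma_iff
    by (rule ddual_characterisations[OF DS_subset_DW DS_subset fdual_subset_ddual_DW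
          fdual_subset_ddual_DF ddual_DS_subset_fdual[unfolded has_Fsigma_iff]
          DF_eq_if_has_Fsigma[unfolded has_Fsigma_iff]])
qed

end
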